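(* For every integer $d>1$, the Fine spectra satisfy $S^F(d-1)\subseteq S^F(d)$, and $$S^F(d)\setminus S^F(d-1)\subseteq \left\{\mu^F(P) \;\middle|\; P \text{ a lattice } d\text{-polytope whose Fine core } \operatorname{core}^F(P) \text{ is a single point}\right\}.$$
   Context: For a $d$-dimensional rational polytope $P\subseteq\mathbb{R}^d$ and $a\in(\mathbb{Z}^d)^*$ let $h_P(a)=\min_{x\in P}\langle a,x\rangle$. For $s>0$ the Fine adjoint polytope is $P^{F(s)}=\{x\in\mathbb{R}^d : \langle a,x\rangle\ge h_P(a)+s \text{ for all } a\in(\mathbb{Z}^d)^*\setminus\{0\}\}$. The Fine $\mathbb{Q}$-codegree is $\mu^F(P)=(\sup\{s>0 : P^{F(s)}\neq\emptyset\})^{-1}$, the Fine number is $n^F(P)=1/\mu^F(P)$, and the Fine core is $\operatorname{core}^F(P)=P^{F(n^F(P))}$. A lattice polytope is a polytope with vertices in $\mathbb{Z}^d$. The Fine spectrum in dimension $d$ is $S^F(d)=\{\mu^F(P) : P \text{ a } d\text{-dimensional lattice polytope}\}$. *)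

theory Defs
  imports "HOL-Analysis.Analysis"
begin

text \<open>Points of R^d are represented as functions nat => real vanishing at
indices >= d; dual lattice vectors as functions nat => int vanishing at indices >= d.\<close>

definition Rd :: "nat \<Rightarrow> (nat \<Rightarrow> real) set" where
  "Rd d = {x. \<forall>i\<ge>d. x i = 0}"

definition Zd :: "nat \<Rightarrow> (nat \<Rightarrow> real) set" where
  "Zd d = {x \<in> Rd d. \<forall>i. x i \<in> \<int>}"

definition dualZd :: "nat \<Rightarrow> (nat \<Rightarrow> int) set" where
  "dualZd d = {a. \<forall>i\<ge>d. a i = 0}"

definition pairing :: "nat \<Rightarrow> (nat \<Rightarrow> int) \<Rightarrow> (nat \<Rightarrow> real) \<Rightarrow> real" where
  "pairing d a x = (\<Sum>i<d. real_of_int (a i) * x i)"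

definition conv :: "(nat \<Rightarrow> real) set \<Rightarrow> (nat \<Rightarrow> real) set" where
  "conv V = {x. \<exists>u. (\<forall>v\<in>V. 0 \<le> u v) \<and> (\<Sum>v\<in>V. u v) = 1 \<and>
                    x = (\<lambda>i. \<Sum>v\<in>V. u v * v i)}"

definition lattice_polytope :: "nat \<Rightarrow> (nat \<Rightarrow> real) set \<Rightarrow> bool" where
  "lattice_polytope d P \<longleftrightarrow> (\<exists>V. finite V \<and> V \<noteq> {} \<and> V \<subseteq> Zd d \<and> P = conv V)"

definition full_dim :: "nat \<Rightarrow> (nat \<Rightarrow> real) set \<Rightarrow> bool" where
  "full_dim d P \<longleftrightarrow> \<not> (\<exists>c :: nat \<Rightarrow> real. \<exists>b. (\<exists>i<d. c i \<noteq> 0) \<and>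
       (\<forall>x\<in>P. (\<Sum>i<d. c i * x i) = b))"

definition hP :: "nat \<Rightarrow> (nat \<Rightarrow> real) set \<Rightarrow> (nat \<Rightarrow> int) \<Rightarrow> real" where
  "hP d P a = Inf (pairing d a ` P)"

definition fine_adjoint :: "nat \<Rightarrow> (nat \<Rightarrow> real) set \<Rightarrow> real \<Rightarrow> (nat \<Rightarrow> real) set" where
  "fine_adjoint d P s = {x \<in> Rd d. \<forall>a \<in> dualZd d. (\<exists>i<d. a i \<noteq> 0) \<longrightarrow> pairing d a x \<ge> hP d P a + s}"

definition fine_number :: "nat \<Rightarrow> (nat \<Rightarrow> real) set \<Rightarrow> real" where
  "fine_number d P = Sup {s. s > 0 \<and> fine_adjoint d P s \<noteq> {}}"

definition fine_codegree :: "nat \<Rightarrow> (nat \<Rightarrow> real) set \<Rightarrow> real" where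
  "fine_codegree d P = inverse (fine_number d P)"

definition fine_core :: "nat \<Rightarrow> (nat \<Rightarrow> real) set \<Rightarrow> (nat \<Rightarrow> real) set" where
  "fine_core d P = fine_adjoint d P (fine_number d P)"

definition fine_spectrum :: "nat \<Rightarrow> real set" where
  "fine_spectrum d = {fine_codegree d P | P. lattice_polytope d P \<and> full_dim d P}"

end

(*
  Prisms give the first inclusion: for a lattice polytope Q and an integer m >= 2 n^F(Q), the
  prism Q x [0, m] has the same Fine number as Q.

  For the second, let n be the Fine number of P.  The Fine core of P is nonempty by compactness;
  suppose it contains two points x /= y, with midpoint x0.  The integral normals that are tight at
  x0 at level n are finitely many, since the slack of x0 at a normal a grows linearly with the
  length of a.  They have a vanishing convex combination: otherwise Gordan's alternative gives a
  direction increasing all of them, and moving x0 slightly along it reaches a level above n.  They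
  are all orthogonal to y - x, hence to a nonzero integral vector v.  A unimodular change of
  coordinates moves v to the last axis, and projecting P along it gives a lattice (d-1)-polytope Q.
  The image of x0 shows that n is a level of Q, and the vanishing convex combination of the tight
  normals, lifted back to P, shows that no level of Q exceeds n.  So Q has Fine number n, and the
  Fine codegree of P already occurs in dimension d - 1.
*)
theory Submission
  imports Defs
begin

definition dot :: "nat \<Rightarrow> (nat \<Rightarrow> real) \<Rightarrow> (nat \<Rightarrow> real) \<Rightarrow> real" where
  "dot d c x = (\<Sum>i<d. c i * x i)"

lemma pairing_eq_dot: "pairing d a x = dot d (\<lambda>i. real_of_int (a i)) x"
  by (simp add: pairing_def dot_def)

lemma full_dim_iff_dot:
  "full_dim d P \<longleftrightarrow> \<not> (\<exists>c b. (\<exists>i<d. c i \<noteq> 0) \<and> (\<forall>x\<in>P. dot d c x = b))"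
  by (simp add: full_dim_def dot_def)

lemma dot_convex_comb: "dot d c (\<lambda>i. \<Sum>v\<in>V. u v * v i) = (\<Sum>v\<in>V. u v * dot d c v)"
  unfolding dot_def by (simp add: sum_distrib_left mult_ac sum.swap[of _ "{..<d}" V])

lemma pairing_convex_comb: "pairing d a (\<lambda>i. \<Sum>v\<in>V. u v * v i) = (\<Sum>v\<in>V. u v * pairing d a v)"
  unfolding pairing_eq_dot by (rule dot_convex_comb)

lemma pairing_Ints: "v \<in> Zd d \<Longrightarrow> pairing d a v \<in> \<int>"
  unfolding pairing_def Zd_def by (auto intro!: Ints_sum Ints_mult)

definition unit_dual :: "nat \<Rightarrow> nat \<Rightarrow> int" where
  "unit_dual i = (\<lambda>j. if j = i then 1 else 0)"

lemma pairing_unit_dual: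
  assumes "i < d"
  shows "pairing d (unit_dual i) x = x i"
proof -
  have "pairing d (unit_dual i) x = (\<Sum>j<d. if j = i then x i else 0)"
    unfolding pairing_def unit_dual_def by (rule sum.cong) auto
  then show ?thesis using assms by simp
qed

lemma pairing_neg: "pairing d (\<lambda>j. - a j) x = - pairing d a x"
  unfolding pairing_def by (simp add: sum_negf)

lemma unit_dual_in_dualZd: "i < d \<Longrightarrow> unit_dual i \<in> dualZd d \<and> (\<exists>j<d. unit_dual i j \<noteq> 0)"
  unfolding unit_dual_def dualZd_def by auto

lemma convex_comb_ge:
  fixes f u :: "'a \<Rightarrow> real"
  assumes "\<forall>v\<in>V. 0 \<le> u v" "sum u V = 1" "\<forall>v\<in>V. m \<le> f v"
  shows "m \<le> (\<Sum>v\<in>V. u v * f v)"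
proof -
  have "m = (\<Sum>v\<in>V. u v * m)" using assms(2) by (simp add: sum_distrib_right[symmetric])
  also have "\<dots> \<le> (\<Sum>v\<in>V. u v * f v)"
    by (rule sum_mono) (use assms in \<open>auto intro: mult_left_mono\<close>)
  finally show ?thesis .
qed

lemma conv_superset:
  assumes "finite V" "v \<in> V"
  shows "v \<in> conv V"
proof -
  define u where "u = (\<lambda>w. if w = v then (1::real) else 0)"
  have "(\<Sum>w\<in>V. u w * w i) = (\<Sum>w\<in>V. if w = v then v i else 0)" for i
    by (rule sum.cong) (auto simp: u_def)
  then have "v = (\<lambda>i. \<Sum>w\<in>V. u w * w i)" using assms by simp
  moreover have "sum u V = 1" using assms by (simp add: u_def)
  moreover have "\<forall>w\<in>V. 0 \<le> u w" by (simp add: u_def)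
  ultimately show ?thesis unfolding conv_def by blast
qed

lemma conv_subset_Rd: "V \<subseteq> Rd d \<Longrightarrow> x \<in> conv V \<Longrightarrow> x \<in> Rd d"
  unfolding conv_def Rd_def by (auto intro!: sum.neutral)

lemma dot_conv_ge:
  assumes "x \<in> conv V" "\<forall>v\<in>V. m \<le> dot d c v"
  shows "m \<le> dot d c x"
proof -
  obtain u where u: "\<forall>v\<in>V. 0 \<le> u v" "sum u V = 1" "x = (\<lambda>i. \<Sum>v\<in>V. u v * v i)"
    using assms(1) unfolding conv_def by auto
  show ?thesis unfolding u(3) dot_convex_comb by (rule convex_comb_ge) (use u assms in auto)
qed

lemma dot_conv_eq:
  assumes "x \<in> conv V" "\<forall>v\<in>V. dot d c v = b"
  shows "dot d c x = b"
proof -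
  have "dot d (\<lambda>i. - c i) y = - dot d c y" for y by (simp add: dot_def sum_negf)
  then show ?thesis using dot_conv_ge[OF assms(1), of b d c] dot_conv_ge[OF assms(1), of "-b" d "\<lambda>i. - c i"] assms(2)
    by auto
qed

lemma hP_conv_eq_Min:
  assumes "finite V" "V \<noteq> {}"
  shows "hP d (conv V) a = Min (pairing d a ` V)"
  unfolding hP_def
proof (rule cInf_eq_minimum)
  show "Min (pairing d a ` V) \<in> pairing d a ` conv V"
    using assms Min_in[of "pairing d a ` V"] conv_superset[OF assms(1)] by blast
next
  fix y assume "y \<in> pairing d a ` conv V"
  then obtain x where "x \<in> conv V" "y = dot d (\<lambda>i. real_of_int (a i)) x" by (auto simp: pairing_eq_dot)
  moreover have "\<forall>v\<in>V. Min (pairing d a ` V) \<le> dot d (\<lambda>i. real_of_int (a i)) v"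
    using assms by (simp add: pairing_eq_dot[symmetric])
  ultimately show "Min (pairing d a ` V) \<le> y" using dot_conv_ge by blast
qed

lemma hP_conv_le: "finite V \<Longrightarrow> v \<in> V \<Longrightarrow> hP d (conv V) a \<le> pairing d a v"
  by (subst hP_conv_eq_Min) auto

lemma hP_conv_attained:
  assumes "finite V" "V \<noteq> {}"
  shows "\<exists>v\<in>V. hP d (conv V) a = pairing d a v"
proof -
  have "Min (pairing d a ` V) \<in> pairing d a ` V" using assms by simp
  then show ?thesis using hP_conv_eq_Min[OF assms] by auto
qed

definition fine_levels :: "nat \<Rightarrow> (nat \<Rightarrow> real) set \<Rightarrow> real set" where
  "fine_levels d P = {s. s > 0 \<and> fine_adjoint d P s \<noteq> {}}"

lemma fine_number_eq_Sup: "fine_number d P = Sup (fine_levels d P)"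
  by (simp add: fine_number_def fine_levels_def)

lemma fine_adjoint_antimono: "x \<in> fine_adjoint d P s \<Longrightarrow> t \<le> s \<Longrightarrow> x \<in> fine_adjoint d P t"
  unfolding fine_adjoint_def by force

lemma Ints_eqI_lt_add1:
  fixes x y :: real
  assumes "x \<in> \<int>" "y \<in> \<int>" "y \<le> x" "x < y + 1"
  shows "x = y"
  using assms by (elim Ints_cases) simp

locale lattice_hull =
  fixes d :: nat and V :: "(nat \<Rightarrow> real) set"
  assumes finite_V: "finite V" and V_nonempty: "V \<noteq> {}" and V_lattice: "V \<subseteq> Zd d"
begin

abbreviation P :: "(nat \<Rightarrow> real) set" where
  "P \<equiv> conv V"

lemma P_subset_Rd: "x \<in> P \<Longrightarrow> x \<in> Rd d"
  using conv_subset_Rd V_lattice by (auto simp: Zd_def)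

lemma hP_Ints: "hP d P a \<in> \<int>"
  using hP_conv_attained[OF finite_V V_nonempty, of d a] pairing_Ints V_lattice by auto

lemma full_dim_imp_vertex_above:
  assumes "full_dim d P" and "\<exists>i<d. a i \<noteq> 0"
  shows "\<exists>v\<in>V. hP d P a + 1 \<le> pairing d a v"
proof (rule ccontr)
  assume below: "\<not> ?thesis"
  have "\<forall>v\<in>V. pairing d a v = hP d P a"
  proof
    fix v assume v: "v \<in> V"
    then have "pairing d a v \<in> \<int>" using pairing_Ints V_lattice by blast
    moreover have "pairing d a v < hP d P a + 1" using below v by auto
    ultimately show "pairing d a v = hP d P a"
      using Ints_eqI_lt_add1 hP_Ints hP_conv_le[OF finite_V v] by blast
  qed
  then have const: "\<forall>x\<in>P. dot d (\<lambda>i. real_of_int (a i)) x = hP d P a"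
    using dot_conv_eq[of _ V d "\<lambda>i. real_of_int (a i)"] by (simp add: pairing_eq_dot)
  have nonzero: "\<exists>i<d. real_of_int (a i) \<noteq> 0" using assms(2) by simp
  have "\<not> full_dim d P"
    unfolding full_dim_iff_dot not_not
    by (rule exI[of _ "\<lambda>i. real_of_int (a i)"], rule exI[of _ "hP d P a"], rule conjI[OF nonzero const])
  then show False using assms(1) by contradiction
qed

text \<open>Integrality of the vertices is what makes the barycenter work: every nonzero dual vector
  rises by at least 1 on some vertex.\<close>
lemma barycenter_in_fine_adjoint:
  assumes "full_dim d P"
  shows "(\<lambda>i. \<Sum>v\<in>V. 1 / card V * v i) \<in> fine_adjoint d P (1 / card V)"
  unfolding fine_adjoint_def
proof (intro CollectI conjI ballI impI)
  have k: "real (card V) > 0" using finite_V V_nonempty by (simp add: card_gt_0_iff)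
  have "(\<lambda>i. \<Sum>v\<in>V. 1 / card V * v i) \<in> P"
    unfolding conv_def using k by (auto intro!: exI[of _ "\<lambda>v. 1 / card V"])
  then show "(\<lambda>i. \<Sum>v\<in>V. 1 / card V * v i) \<in> Rd d" using P_subset_Rd by simp
  fix a assume "a \<in> dualZd d" "\<exists>i<d. a i \<noteq> 0"
  then obtain v1 where v1: "v1 \<in> V" "hP d P a + 1 \<le> pairing d a v1"
    using full_dim_imp_vertex_above assms by blast
  have "(\<Sum>v\<in>V-{v1}. hP d P a) \<le> (\<Sum>v\<in>V-{v1}. pairing d a v)"
    by (rule sum_mono) (use hP_conv_le finite_V in auto)
  moreover have "(\<Sum>v\<in>V. hP d P a) = hP d P a + (\<Sum>v\<in>V-{v1}. hP d P a)"
    using finite_V v1(1) by (rule sum.remove)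
  moreover have "(\<Sum>v\<in>V. pairing d a v) = pairing d a v1 + (\<Sum>v\<in>V-{v1}. pairing d a v)"
    using finite_V v1(1) by (rule sum.remove)
  ultimately have "card V * hP d P a + 1 \<le> (\<Sum>v\<in>V. pairing d a v)"
    using v1(2) by simp
  then have "(card V * hP d P a + 1) / card V \<le> (\<Sum>v\<in>V. pairing d a v) / card V"
    using k by (rule divide_right_mono[OF _ less_imp_le])
  moreover have "(card V * hP d P a + 1) / card V = hP d P a + 1 / card V"
    using k by (simp add: add_divide_distrib)
  moreover have "pairing d a (\<lambda>i. \<Sum>v\<in>V. 1 / card V * v i) = (\<Sum>v\<in>V. pairing d a v) / card V"
    unfolding pairing_convex_comb by (simp add: sum_divide_distrib)
  ultimately show "hP d P a + 1 / card V \<le> pairing d a (\<lambda>i. \<Sum>v\<in>V. 1 / card V * v i)"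
    by linarith
qed

lemma fine_adjoint_coordinate_bounds:
  assumes "x \<in> fine_adjoint d P s" "i < d"
  obtains v1 v2 where "v1 \<in> V" "v2 \<in> V" "v1 i + s \<le> x i" "x i + s \<le> v2 i"
proof -
  define e where "e = unit_dual i"
  define e' where "e' = (\<lambda>j. - unit_dual i j)"
  have "e \<in> dualZd d" "\<exists>j<d. e j \<noteq> 0" "e' \<in> dualZd d" "\<exists>j<d. e' j \<noteq> 0"
    using unit_dual_in_dualZd[OF assms(2)] by (auto simp: e_def e'_def dualZd_def)
  then have "hP d P e + s \<le> pairing d e x" "hP d P e' + s \<le> pairing d e' x"
    using assms(1) unfolding fine_adjoint_def by auto
  moreover obtain v1 where "v1 \<in> V" "hP d P e = pairing d e v1"
    using hP_conv_attained[OF finite_V V_nonempty] by blast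
  moreover obtain v2 where "v2 \<in> V" "hP d P e' = pairing d e' v2"
    using hP_conv_attained[OF finite_V V_nonempty] by blast
  moreover have "pairing d e y = y i" "pairing d e' y = - y i" for y
    using pairing_unit_dual[OF assms(2)] pairing_neg by (simp_all add: e_def e'_def)
  ultimately show ?thesis using that by force
qed

lemma fine_adjoint_in_box:
  assumes "x \<in> fine_adjoint d P s" "0 \<le> s" "i < d"
  shows "\<bar>x i\<bar> \<le> (\<Sum>v\<in>V. \<bar>v i\<bar>)"
proof -
  obtain v1 v2 where "v1 \<in> V" "v2 \<in> V" "v1 i + s \<le> x i" "x i + s \<le> v2 i"
    using fine_adjoint_coordinate_bounds[OF assms(1,3)] .
  moreover have "\<bar>v1 i\<bar> \<le> (\<Sum>v\<in>V. \<bar>v i\<bar>)" "\<bar>v2 i\<bar> \<le> (\<Sum>v\<in>V. \<bar>v i\<bar>)"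
    using calculation(1,2) finite_V by (auto intro!: member_le_sum)
  ultimately show ?thesis using assms(2) by linarith
qed

lemma fine_levels_bdd_above:
  assumes "d > 0"
  shows "bdd_above (fine_levels d P)"
proof (rule bdd_aboveI)
  fix s assume "s \<in> fine_levels d P"
  then obtain x where "x \<in> fine_adjoint d P s" by (auto simp: fine_levels_def)
  then obtain v1 v2 where "v1 \<in> V" "v2 \<in> V" "v1 0 + s \<le> x 0" "x 0 + s \<le> v2 0"
    using assms by (rule fine_adjoint_coordinate_bounds)
  moreover have "\<bar>v1 0\<bar> \<le> (\<Sum>v\<in>V. \<bar>v 0\<bar>)" "\<bar>v2 0\<bar> \<le> (\<Sum>v\<in>V. \<bar>v 0\<bar>)"
    using calculation(1,2) finite_V by (auto intro!: member_le_sum)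
  ultimately show "s \<le> (\<Sum>v\<in>V. \<bar>v 0\<bar>)" by linarith
qed

lemma le_fine_number: "d > 0 \<Longrightarrow> s \<in> fine_levels d P \<Longrightarrow> s \<le> fine_number d P"
  unfolding fine_number_eq_Sup using fine_levels_bdd_above by (simp add: cSup_upper)

lemma one_div_card_in_fine_levels: "full_dim d P \<Longrightarrow> 1 / card V \<in> fine_levels d P"
  using barycenter_in_fine_adjoint finite_V V_nonempty by (auto simp: fine_levels_def card_gt_0_iff)

lemma fine_number_pos:
  assumes "d > 0" "full_dim d P"
  shows "fine_number d P > 0"
proof -
  have "1 / real (card V) \<le> fine_number d P"
    using le_fine_number[OF assms(1) one_div_card_in_fine_levels[OF assms(2)]] .
  moreover have "1 / real (card V) > 0" using finite_V V_nonempty by (simp add: card_gt_0_iff)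
  ultimately show ?thesis by linarith
qed

end

section \<open>Prisms\<close>

lemma dot_Suc: "dot (Suc d) c x = dot d c x + c d * x d"
  by (simp add: dot_def)

lemma dot_upd_last: "dot d c (x(d := t)) = dot d c x"
  unfolding dot_def by (rule sum.cong) auto

lemma dot_cong: "(\<And>i. i < d \<Longrightarrow> c i = c' i) \<Longrightarrow> dot d c x = dot d c' x"
  unfolding dot_def by (rule sum.cong) auto

lemma pairing_Suc: "pairing (Suc d) a x = pairing d a x + real_of_int (a d) * x d"
  by (simp add: pairing_def)

lemma pairing_upd_last: "pairing d a (x(d := t)) = pairing d a x"
  by (simp add: pairing_eq_dot dot_upd_last)

lemma pairing_Suc_upd: "pairing (Suc d) a (x(d := t)) = pairing d a x + real_of_int (a d) * t"
  by (simp add: pairing_eq_dot dot_Suc dot_upd_last)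

lemma pairing_cong: "(\<And>i. i < d \<Longrightarrow> a i = a' i) \<Longrightarrow> pairing d a x = pairing d a' x"
  unfolding pairing_eq_dot by (rule dot_cong) simp

text \<open>The convex hull of \<open>prism d V m\<close> is \<open>conv V \<times> [0, m]\<close>, the new coordinate being \<open>d\<close>.\<close>
definition prism :: "nat \<Rightarrow> (nat \<Rightarrow> real) set \<Rightarrow> real \<Rightarrow> (nat \<Rightarrow> real) set" where
  "prism d V m = (\<lambda>(w, t). w(d := t)) ` (V \<times> {0, m})"

lemma prism_memI: "w \<in> V \<Longrightarrow> t \<in> {0, m} \<Longrightarrow> w(d := t) \<in> prism d V m"
  unfolding prism_def by force

lemma finite_prism: "finite V \<Longrightarrow> finite (prism d V m)"
  by (simp add: prism_def)

lemma prism_nonempty: "V \<noteq> {} \<Longrightarrow> prism d V m \<noteq> {}"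
  by (simp add: prism_def)

lemma prism_memE:
  assumes "v \<in> prism d V m"
  obtains w t where "w \<in> V" "t \<in> {0, m}" "v = w(d := t)"
  using assms unfolding prism_def by auto

context lattice_hull
begin

lemma prism_lattice_hull:
  assumes "m \<in> \<int>"
  shows "lattice_hull (Suc d) (prism d V m)"
proof
  show "finite (prism d V m)" using finite_V by (rule finite_prism)
  show "prism d V m \<noteq> {}" using V_nonempty by (rule prism_nonempty)
  show "prism d V m \<subseteq> Zd (Suc d)"
  proof
    fix v assume "v \<in> prism d V m"
    then obtain w t where "w \<in> V" "t \<in> {0, m}" and v: "v = w(d := t)" by (rule prism_memE)
    then have "w \<in> Zd d" "t \<in> \<int>" using V_lattice assms by auto
    then show "v \<in> Zd (Suc d)" unfolding v by (simp add: Zd_def Rd_def)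
  qed
qed

lemma full_dim_prism:
  assumes "full_dim d P" "m \<noteq> 0"
  shows "full_dim (Suc d) (conv (prism d V m))"
  unfolding full_dim_iff_dot
proof
  assume "\<exists>c b. (\<exists>i<Suc d. c i \<noteq> 0) \<and> (\<forall>x\<in>conv (prism d V m). dot (Suc d) c x = b)"
  then obtain c b where c: "\<exists>i<Suc d. c i \<noteq> 0"
    and const: "\<forall>x\<in>conv (prism d V m). dot (Suc d) c x = b" by blast
  have on_prism: "dot d c w + c d * t = b" if "w \<in> V" "t \<in> {0, m}" for w t
  proof -
    have "w(d := t) \<in> conv (prism d V m)"
      using conv_superset[OF finite_prism[OF finite_V]] prism_memI[OF that] by blast
    then have "dot (Suc d) c (w(d := t)) = b" using const by blast
    then show ?thesis by (simp add: dot_Suc dot_upd_last)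
  qed
  obtain w0 where "w0 \<in> V" using V_nonempty by auto
  then have "c d = 0" using on_prism[of w0 0] on_prism[of w0 m] assms(2) by simp
  then have "\<forall>w\<in>V. dot d c w = b" using on_prism by fastforce
  then have "\<forall>x\<in>P. dot d c x = b" using dot_conv_eq by blast
  then have "\<not> (\<exists>i<d. c i \<noteq> 0)" using assms(1) unfolding full_dim_iff_dot by blast
  then have "\<forall>i<Suc d. c i = 0" using \<open>c d = 0\<close> by (simp add: less_Suc_eq)
  then show False using c by blast
qed

lemma fine_levels_prism_subset: "fine_levels (Suc d) (conv (prism d V m)) \<subseteq> fine_levels d P"
proof
  fix s assume "s \<in> fine_levels (Suc d) (conv (prism d V m))"
  then obtain x where x: "x \<in> fine_adjoint (Suc d) (conv (prism d V m)) s" and "s > 0"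
    by (auto simp: fine_levels_def)
  have "x(d := 0) \<in> fine_adjoint d P s"
    unfolding fine_adjoint_def
  proof (intro CollectI conjI ballI impI)
    show "x(d := 0) \<in> Rd d" using x by (auto simp: fine_adjoint_def Rd_def)
    fix b assume b: "b \<in> dualZd d" "\<exists>i<d. b i \<noteq> 0"
    then have "b \<in> dualZd (Suc d)" "\<exists>i<Suc d. b i \<noteq> 0"
      by (auto simp: dualZd_def intro: less_SucI)
    then have "hP (Suc d) (conv (prism d V m)) b + s \<le> pairing (Suc d) b x"
      using x unfolding fine_adjoint_def by blast
    moreover obtain v where v: "v \<in> prism d V m" "hP (Suc d) (conv (prism d V m)) b = pairing (Suc d) b v"
      using hP_conv_attained[OF finite_prism[OF finite_V] prism_nonempty[OF V_nonempty]] by blast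
    moreover obtain w t where "w \<in> V" "v = w(d := t)" using v(1) by (rule prism_memE)
    moreover have "b d = 0" using b(1) by (simp add: dualZd_def)
    ultimately have "hP d P b + s \<le> pairing d b x"
      using hP_conv_le[OF finite_V, of w d b] by (simp add: pairing_Suc pairing_upd_last)
    then show "hP d P b + s \<le> pairing d b (x(d := 0))" by (simp add: pairing_upd_last)
  qed
  then show "s \<in> fine_levels d P" using \<open>s > 0\<close> by (auto simp: fine_levels_def)
qed

lemma fine_adjoint_prism:
  assumes y: "y \<in> fine_adjoint d P s" and s: "0 < s" "2 * s \<le> m"
  shows "y(d := m / 2) \<in> fine_adjoint (Suc d) (conv (prism d V m)) s"
  unfolding fine_adjoint_def
proof (intro CollectI conjI ballI impI)
  show "y(d := m / 2) \<in> Rd (Suc d)" using y by (auto simp: fine_adjoint_def Rd_def)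
  fix a assume a: "a \<in> dualZd (Suc d)" "\<exists>i<Suc d. a i \<noteq> 0"
  have hP_prism_le: "hP (Suc d) (conv (prism d V m)) a \<le> pairing d a w + real_of_int (a d) * t"
    if "w \<in> V" "t \<in> {0, m}" for w t
  proof -
    have "w(d := t) \<in> prism d V m" using that by (rule prism_memI)
    then have "hP (Suc d) (conv (prism d V m)) a \<le> pairing (Suc d) a (w(d := t))"
      by (rule hP_conv_le[OF finite_prism[OF finite_V]])
    then show ?thesis by (simp add: pairing_Suc_upd)
  qed
  have half_m: "s \<le> m / 2" using s by simp
  show "hP (Suc d) (conv (prism d V m)) a + s \<le> pairing (Suc d) a (y(d := m / 2))"
  proof (cases "\<exists>i<d. a i \<noteq> 0")
    case True
    have "a(d := 0) \<in> dualZd d" "\<exists>i<d. (a(d := 0)) i \<noteq> 0" using a(1) True by (auto simp: dualZd_def)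
    then have y_above: "hP d P (a(d := 0)) + s \<le> pairing d (a(d := 0)) y"
      using y unfolding fine_adjoint_def by blast
    have same: "pairing d (a(d := 0)) z = pairing d a z" for z by (rule pairing_cong) simp
    obtain w where w: "w \<in> V" "hP d P (a(d := 0)) = pairing d (a(d := 0)) w"
      using hP_conv_attained[OF finite_V V_nonempty] by blast
    define t where "t = (if a d \<ge> 0 then 0 else m)"
    have t: "t \<in> {0, m}" by (simp add: t_def)
    have "real_of_int (a d) * t \<le> real_of_int (a d) * (m / 2)"
      using half_m s(1) by (auto simp: t_def mult_left_mono_neg)
    then show ?thesis
      using hP_prism_le[OF w(1) t] y_above w(2) by (simp add: same pairing_Suc_upd)
  next
    case False
    then have "a d \<noteq> 0" using a(2) less_Suc_eq by auto
    have p0: "pairing d a z = 0" for z using False unfolding pairing_def by simp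
    obtain w0 where w0: "w0 \<in> V" using V_nonempty by auto
    consider "a d \<ge> 1" | "a d \<le> -1" using \<open>a d \<noteq> 0\<close> by linarith
    then show ?thesis
    proof cases
      case 1
      then have "1 * (m / 2) \<le> real_of_int (a d) * (m / 2)"
        using half_m s(1) by (intro mult_right_mono) auto
      then show ?thesis using hP_prism_le[OF w0, of 0] half_m by (simp add: p0 pairing_Suc_upd)
    next
      case 2
      then have "1 * (m / 2) \<le> - real_of_int (a d) * (m / 2)"
        using half_m s(1) by (intro mult_right_mono) auto
      then show ?thesis using hP_prism_le[OF w0, of m] half_m by (simp add: p0 pairing_Suc_upd)
    qed
  qed
qed

lemma fine_number_prism:
  assumes "d > 0" "2 * fine_number d P \<le> m"
  shows "fine_number (Suc d) (conv (prism d V m)) = fine_number d P"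
proof -
  have "fine_levels d P \<subseteq> fine_levels (Suc d) (conv (prism d V m))"
  proof
    fix s assume s: "s \<in> fine_levels d P"
    then have "2 * s \<le> m" using le_fine_number[OF assms(1) s] assms(2) by simp
    then show "s \<in> fine_levels (Suc d) (conv (prism d V m))"
      using s fine_adjoint_prism unfolding fine_levels_def by blast
  qed
  then have "fine_levels (Suc d) (conv (prism d V m)) = fine_levels d P"
    using fine_levels_prism_subset by blast
  then show ?thesis by (simp add: fine_number_eq_Sup)
qed

end

lemma lattice_polytope_iff_hull: "lattice_polytope d P \<longleftrightarrow> (\<exists>V. lattice_hull d V \<and> P = conv V)"
  by (simp add: lattice_polytope_def lattice_hull_def)

lemma fine_spectrum_subset_Suc:
  assumes "e > 0"
  shows "fine_spectrum e \<subseteq> fine_spectrum (Suc e)"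
proof
  fix \<mu> assume "\<mu> \<in> fine_spectrum e"
  then obtain W where \<mu>: "\<mu> = fine_codegree e (conv W)" and fd: "full_dim e (conv W)"
    and W: "lattice_hull e W"
    by (auto simp: fine_spectrum_def lattice_polytope_iff_hull)
  interpret lattice_hull e W by (rule W)
  define m :: real where "m = of_int \<lceil>2 * fine_number e P\<rceil>"
  have "2 * fine_number e P \<le> m" "m \<noteq> 0"
    using fine_number_pos[OF assms fd] by (auto simp: m_def) linarith
  then have "fine_codegree (Suc e) (conv (prism e W m)) = \<mu>"
    using fine_number_prism[OF assms] by (simp add: \<mu> fine_codegree_def)
  moreover have "lattice_polytope (Suc e) (conv (prism e W m))"
    using prism_lattice_hull[of m] by (auto simp: lattice_polytope_iff_hull m_def)
  moreover have "full_dim (Suc e) (conv (prism e W m))"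
    using full_dim_prism[OF fd \<open>m \<noteq> 0\<close>] .
  ultimately show "\<mu> \<in> fine_spectrum (Suc e)" unfolding fine_spectrum_def by blast
qed

section \<open>Nonemptiness of the Fine core\<close>

lemma compact_PiE_atLeastAtMost: "compact (PiE UNIV (\<lambda>i. {lo i .. (hi i :: real)}))"
proof -
  have "compactin (product_topology (\<lambda>i. euclidean) UNIV) (PiE UNIV (\<lambda>i. {lo i .. hi i}))"
    by (subst compactin_PiE) (auto simp: compactin_euclidean_iff)
  then show ?thesis by (simp add: euclidean_product_topology compactin_euclidean_iff)
qed

lemma continuous_on_pairing: "continuous_on UNIV (pairing d a)"
  unfolding pairing_def by (intro continuous_intros continuous_on_product_coordinates)

lemma closed_fine_adjoint: "closed (fine_adjoint d P s)"
proof -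
  have "fine_adjoint d P s = {x. \<forall>i. d \<le> i \<longrightarrow> x i = 0} \<inter>
      {x. \<forall>a. a \<in> dualZd d \<and> (\<exists>i<d. a i \<noteq> 0) \<longrightarrow> hP d P a + s \<le> pairing d a x}"
    unfolding fine_adjoint_def Rd_def by auto
  moreover have "closed {x :: nat \<Rightarrow> real. \<forall>i. d \<le> i \<longrightarrow> x i = 0}"
    by (intro closed_Collect_all closed_Collect_imp closed_Collect_eq continuous_on_product_coordinates
        continuous_on_const) auto
  moreover have "closed {x. \<forall>a. a \<in> dualZd d \<and> (\<exists>i<d. a i \<noteq> 0) \<longrightarrow> hP d P a + s \<le> pairing d a x}"
    by (intro closed_Collect_all closed_Collect_imp closed_Collect_le continuous_on_pairing
        continuous_on_const) auto
  ultimately show ?thesis by auto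
qed

lemma fine_adjoint_Sup:
  assumes "S \<noteq> {}" "bdd_above S" "\<forall>s\<in>S. x \<in> fine_adjoint d P s"
  shows "x \<in> fine_adjoint d P (Sup S)"
  unfolding fine_adjoint_def
proof (intro CollectI conjI ballI impI)
  show "x \<in> Rd d" using assms(1,3) by (auto simp: fine_adjoint_def)
  fix a assume "a \<in> dualZd d" "\<exists>i<d. a i \<noteq> 0"
  then have "\<forall>s\<in>S. s \<le> pairing d a x - hP d P a"
    using assms(3) unfolding fine_adjoint_def by fastforce
  then have "Sup S \<le> pairing d a x - hP d P a" using assms(1) by (intro cSup_least) auto
  then show "hP d P a + Sup S \<le> pairing d a x" by simp
qed

context lattice_hull
begin

text \<open>All nonempty adjoints at levels \<open>s \<ge> 0\<close> lie in one compact box, so the nested closed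
  sets \<^term>\<open>fine_adjoint d P s\<close>, \<open>s < fine_number d P\<close>, have a common point.\<close>
lemma fine_core_nonempty:
  assumes "d > 0" "full_dim d P"
  shows "fine_core d P \<noteq> {}"
proof -
  define r where "r i = (if i < d then (\<Sum>v\<in>V. \<bar>v i\<bar>) else 0)" for i
  define B where "B = PiE UNIV (\<lambda>i. {- r i .. r i})"
  have in_B: "x \<in> B" if "x \<in> fine_adjoint d P s" "0 \<le> s" for x s
  proof -
    have "x \<in> Rd d" using that by (auto simp: fine_adjoint_def)
    then show ?thesis
      using fine_adjoint_in_box[OF that] by (auto simp: B_def r_def Rd_def abs_le_iff minus_le_iff)
  qed
  define F where "F = fine_adjoint d P ` fine_levels d P"
  have "B \<inter> \<Inter>F \<noteq> {}"
  proof (rule compact_imp_fip)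
    show "compact B" unfolding B_def by (rule compact_PiE_atLeastAtMost)
    show "\<And>T. T \<in> F \<Longrightarrow> closed T" unfolding F_def using closed_fine_adjoint by auto
  next
    fix F' assume "finite F'" "F' \<subseteq> F"
    then obtain S' where S': "finite S'" "S' \<subseteq> fine_levels d P" "F' = fine_adjoint d P ` S'"
      unfolding F_def by (meson finite_subset_image)
    show "B \<inter> \<Inter>F' \<noteq> {}"
    proof (cases "S' = {}")
      case True
      have "(\<lambda>i. 0) \<in> B" by (auto simp: B_def r_def sum_nonneg)
      then show ?thesis using True S' by auto
    next
      case False
      then have "Max S' \<in> fine_levels d P" using Max_in[OF S'(1)] S'(2) by auto
      then obtain x where x: "x \<in> fine_adjoint d P (Max S')" "Max S' > 0" by (auto simp: fine_levels_def)
      then have "x \<in> \<Inter>F'" using S' False fine_adjoint_antimono by auto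
      then show ?thesis using in_B x by fastforce
    qed
  qed
  then obtain x where "\<forall>s\<in>fine_levels d P. x \<in> fine_adjoint d P s" unfolding F_def by auto
  moreover have "fine_levels d P \<noteq> {}" using one_div_card_in_fine_levels[OF assms(2)] by blast
  ultimately have "x \<in> fine_adjoint d P (Sup (fine_levels d P))"
    using fine_adjoint_Sup fine_levels_bdd_above[OF assms(1)] by blast
  then show ?thesis by (auto simp: fine_core_def fine_number_eq_Sup)
qed

end

section \<open>Slack at long dual vectors\<close>

definition norm1 :: "nat \<Rightarrow> (nat \<Rightarrow> int) \<Rightarrow> real" where
  "norm1 d a = (\<Sum>i<d. \<bar>real_of_int (a i)\<bar>)"

lemma norm1_nonneg: "0 \<le> norm1 d a"
  unfolding norm1_def by (simp add: sum_nonneg)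

lemma abs_le_norm1: "i < d \<Longrightarrow> \<bar>real_of_int (a i)\<bar> \<le> norm1 d a"
  unfolding norm1_def by (rule member_le_sum) auto

lemma norm1_eq_0_iff: "norm1 d a = 0 \<longleftrightarrow> (\<forall>i<d. a i = 0)"
  unfolding norm1_def by (auto simp: sum_nonneg_eq_0_iff)

lemma dirichlet_dual_approx:
  fixes a :: "nat \<Rightarrow> int" and N :: nat
  assumes L: "norm1 d a > 0" and N: "N > d"
  obtains q :: int and p :: "nat \<Rightarrow> int"
  where "0 < q" "q \<le> int (N ^ d)" "p \<in> dualZd d" "\<exists>i<d. p i \<noteq> 0"
    "\<And>i. i < d \<Longrightarrow> \<bar>of_int q * (a i / norm1 d a) - of_int (p i)\<bar> < 1 / N"
proof -
  define u where "u i = real_of_int (a i) / norm1 d a" for i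
  have "N > 0" using N by simp
  then obtain q p where q: "0 < q" "q \<le> int (N ^ d)"
    and pq: "\<And>i. i < d \<Longrightarrow> \<bar>of_int q * u i - of_int (p i)\<bar> < 1 / N"
    using Dirichlet_approx_simult[where \<theta>=u and n=d] by blast
  define p' where "p' i = (if i < d then p i else 0)" for i
  have "\<exists>i<d. p' i \<noteq> 0"
  proof (rule ccontr)
    assume "\<not> ?thesis"
    then have "\<bar>of_int q * u i\<bar> \<le> 1 / N" if "i < d" for i
      using pq[OF that] that by (simp add: p'_def)
    then have "(\<Sum>i<d. \<bar>of_int q * u i\<bar>) \<le> (\<Sum>i<d. 1 / real N)" by (intro sum_mono) auto
    also have "\<dots> < 1" using N by simp
    also have "1 \<le> real_of_int q" using q(1) by simp
    also have "real_of_int q = (\<Sum>i<d. \<bar>of_int q * u i\<bar>)"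
      using L q(1) by (simp add: u_def abs_mult sum_distrib_left[symmetric] sum_divide_distrib[symmetric] norm1_def)
    finally show False by simp
  qed
  moreover have "p' \<in> dualZd d" by (simp add: p'_def dualZd_def)
  ultimately show ?thesis using that[OF q, of p'] pq by (simp add: p'_def u_def)
qed

lemma sum_approx_error_le:
  fixes N :: nat
  assumes "\<And>i. i < d \<Longrightarrow> \<bar>c i - of_int (p i)\<bar> < 1 / N"
  shows "(\<Sum>i<d. (of_int (p i) - c i) * y i) \<le> (\<Sum>i<d. \<bar>y i\<bar>) / N"
  unfolding sum_divide_distrib
proof (rule sum_mono)
  fix i assume "i \<in> {..<d}"
  then have "\<bar>of_int (p i) - c i\<bar> \<le> 1 / N" using assms[of i] by (simp add: abs_minus_commute)
  then have "\<bar>(of_int (p i) - c i) * y i\<bar> \<le> 1 / N * \<bar>y i\<bar>"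
    unfolding abs_mult by (rule mult_right_mono) auto
  then show "(of_int (p i) - c i) * y i \<le> \<bar>y i\<bar> / N" by simp
qed

context lattice_hull
begin

text \<open>Approximating the direction of \<open>a\<close> by an integral \<open>p / q\<close> (Dirichlet) transfers the
  slack \<open>s\<close> of \<open>x\<close> at \<open>p\<close> to a slack proportional to \<^term>\<open>norm1 d a\<close> at \<open>a\<close>.\<close>
lemma fine_adjoint_slack_at_dual:
  fixes N :: nat
  assumes x: "x \<in> fine_adjoint d P s" and a: "a \<in> dualZd d" "norm1 d a > 0"
    and N: "N > d" "(\<Sum>v\<in>V. \<Sum>i<d. \<bar>x i - v i\<bar>) / N < s / 2"
  shows "s * norm1 d a / (2 * real (N ^ d)) \<le> pairing d a x - hP d P a"
proof -
  have "0 \<le> (\<Sum>v\<in>V. \<Sum>i<d. \<bar>x i - v i\<bar>) / N" by (simp add: sum_nonneg)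
  then have s_pos: "s > 0" using N(2) by linarith
  define L where "L = norm1 d a"
  have L: "L > 0" using a(2) by (simp add: L_def)
  obtain q p where q: "0 < q" "q \<le> int (N ^ d)" and p: "p \<in> dualZd d" "\<exists>i<d. p i \<noteq> 0"
    and pq: "\<And>i. i < d \<Longrightarrow> \<bar>of_int q * (a i / L) - of_int (p i)\<bar> < 1 / N"
    using dirichlet_dual_approx[OF a(2) N(1)] unfolding L_def by blast
  obtain v where v: "v \<in> V" "hP d P p = pairing d p v"
    using hP_conv_attained[OF finite_V V_nonempty] by blast
  have "s \<le> pairing d p x - pairing d p v" using x p v(2) unfolding fine_adjoint_def by auto
  also have "\<dots> = (\<Sum>i<d. of_int q * (a i / L) * (x i - v i))
      + (\<Sum>i<d. (of_int (p i) - of_int q * (a i / L)) * (x i - v i))"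
    unfolding pairing_def sum_subtractf[symmetric] sum.distrib[symmetric]
    by (rule sum.cong) (simp_all add: algebra_simps)
  also have "(\<Sum>i<d. of_int q * (a i / L) * (x i - v i)) = (\<Sum>i<d. of_int q / L * (a i * x i - a i * v i))"
    by (rule sum.cong) (simp_all add: algebra_simps diff_divide_distrib)
  also have "\<dots> = of_int q / L * (pairing d a x - pairing d a v)"
    unfolding pairing_def by (simp only: sum_distrib_left[symmetric] sum_subtractf)
  also have "(\<Sum>i<d. (of_int (p i) - of_int q * (a i / L)) * (x i - v i)) \<le> (\<Sum>i<d. \<bar>x i - v i\<bar>) / N"
    using pq by (rule sum_approx_error_le)
  also have "(\<Sum>i<d. \<bar>x i - v i\<bar>) / N \<le> (\<Sum>v\<in>V. \<Sum>i<d. \<bar>x i - v i\<bar>) / N"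
    using v(1) finite_V
    by (intro divide_right_mono member_le_sum[where f = "\<lambda>v. \<Sum>i<d. \<bar>x i - v i\<bar>"]) (auto intro!: sum_nonneg)
  finally have "s / 2 < of_int q / L * (pairing d a x - pairing d a v)" using N(2) by linarith
  also have "\<dots> \<le> of_int q / L * (pairing d a x - hP d P a)"
    using hP_conv_le[OF finite_V v(1)] q(1) L by (intro mult_left_mono) auto
  finally have "s * L / (2 * of_int q) < pairing d a x - hP d P a"
    using q(1) L by (simp add: field_simps)
  moreover have "s * L / (2 * real (N ^ d)) \<le> s * L / (2 * of_int q)"
  proof (rule divide_left_mono)
    have "real_of_int q \<le> real_of_int (int (N ^ d))" using q(2) by (simp only: of_int_le_iff)
    then show "2 * real_of_int q \<le> 2 * real (N ^ d)" by simp
  qed (use q(1) L s_pos N(1) in auto)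
  ultimately show ?thesis unfolding L_def by linarith
qed

lemma fine_adjoint_slack_ge_norm1:
  assumes x: "x \<in> fine_adjoint d P s" and s: "s > 0"
  obtains \<delta> where "\<delta> > 0" "\<And>a. a \<in> dualZd d \<Longrightarrow> \<delta> * norm1 d a \<le> pairing d a x - hP d P a"
proof -
  define D where "D = (\<Sum>v\<in>V. \<Sum>i<d. \<bar>x i - v i\<bar>)"
  have "D \<ge> 0" unfolding D_def by (auto intro!: sum_nonneg)
  define N :: nat where "N = nat \<lceil>2 * D / s\<rceil> + d + 1"
  have N: "N > d" "N > 0" unfolding N_def by auto
  have "2 * D / s < real N" unfolding N_def by linarith
  then have DN: "D / N < s / 2" using s N(2) by (simp add: field_simps)
  define \<delta> where "\<delta> = s / (2 * real (N ^ d))"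
  have "\<delta> * norm1 d a \<le> pairing d a x - hP d P a" if a: "a \<in> dualZd d" for a
  proof (cases "norm1 d a = 0")
    case True
    then have "pairing d a y = 0" for y by (simp add: norm1_eq_0_iff pairing_def)
    moreover obtain v where "hP d P a = pairing d a v"
      using hP_conv_attained[OF finite_V V_nonempty] by blast
    ultimately show ?thesis using True by simp
  next
    case False
    then have "norm1 d a > 0" using norm1_nonneg[of d a] by linarith
    then show ?thesis
      using fine_adjoint_slack_at_dual[OF x a _ N(1)] DN unfolding D_def \<delta>_def by simp
  qed
  moreover have "\<delta> > 0" unfolding \<delta>_def using s N(2) by simp
  ultimately show ?thesis using that by blast
qed

end

section \<open>Gordan's alternative\<close>

lemma sum_sq_convex_step_lt:
  fixes b c :: "nat \<Rightarrow> real"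
  assumes "(\<Sum>i<d. b i * c i) \<le> 0" "\<exists>i<d. c i \<noteq> 0"
  obtains t where "0 < t" "t \<le> 1" "(\<Sum>i<d. ((1 - t) * c i + t * b i)\<^sup>2) < (\<Sum>i<d. (c i)\<^sup>2)"
proof -
  define A where "A = (\<Sum>i<d. (c i)\<^sup>2)"
  define C where "C = (\<Sum>i<d. (b i)\<^sup>2)"
  have "C \<ge> 0" unfolding C_def by (simp add: sum_nonneg)
  obtain j where "j < d" "c j \<noteq> 0" using assms(2) by blast
  then have "(c j)\<^sup>2 \<le> A" "(c j)\<^sup>2 > 0" unfolding A_def by (auto intro: member_le_sum)
  then have "A > 0" by linarith
  define t where "t = A / (A + C)"
  have t: "0 < t" "t \<le> 1" unfolding t_def using \<open>A > 0\<close> \<open>C \<ge> 0\<close> by auto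
  have "(\<Sum>i<d. ((1 - t) * c i + t * b i)\<^sup>2)
      = (\<Sum>i<d. (1 - t)\<^sup>2 * (c i)\<^sup>2 + 2 * t * (1 - t) * (b i * c i) + t\<^sup>2 * (b i)\<^sup>2)"
    by (rule sum.cong) (auto simp: power2_eq_square algebra_simps)
  also have "\<dots> = (1 - t)\<^sup>2 * A + 2 * t * (1 - t) * (\<Sum>i<d. b i * c i) + t\<^sup>2 * C"
    by (simp add: A_def C_def sum.distrib sum_distrib_left)
  also have "\<dots> \<le> (1 - t)\<^sup>2 * A + t\<^sup>2 * C"
    using assms(1) t by (simp add: mult_nonneg_nonpos)
  also have "\<dots> = A - t * (2 * A - t * (A + C))" by (simp add: power2_eq_square algebra_simps)
  also have "t * (A + C) = A" unfolding t_def using \<open>A > 0\<close> \<open>C \<ge> 0\<close> by simp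
  finally have "(\<Sum>i<d. ((1 - t) * c i + t * b i)\<^sup>2) \<le> A - t * A" by simp
  moreover have "0 < t * A" using t(1) \<open>A > 0\<close> by simp
  ultimately show ?thesis using that[OF t] unfolding A_def by linarith
qed

text \<open>The minimiser of the norm over the convex hull of \<open>T\<close> is either \<open>0\<close> or a direction \<open>w\<close>.\<close>
lemma gordan_alternative:
  fixes T :: "(nat \<Rightarrow> int) set"
  assumes "finite T"
  obtains (positive) w where "w \<in> Rd d" "\<forall>a\<in>T. 0 < pairing d a w"
  | (zero_combination) l where "\<forall>a\<in>T. 0 \<le> l a" "sum l T = 1"
      "\<forall>i<d. (\<Sum>a\<in>T. l a * real_of_int (a i)) = 0"
proof (cases "T = {}")
  case True
  then show ?thesis using positive[of "\<lambda>i. 0"] by (simp add: Rd_def)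
next
  case False
  then obtain a0 where a0: "a0 \<in> T" by auto
  define \<Delta> where "\<Delta> = PiE UNIV (\<lambda>a. {0 .. (if a \<in> T then 1 else 0 :: real)}) \<inter> {l. sum l T = 1}"
  have "closed {l :: (nat \<Rightarrow> int) \<Rightarrow> real. sum l T = 1}"
    by (intro closed_Collect_eq continuous_intros continuous_on_product_coordinates)
  then have "compact \<Delta>" unfolding \<Delta>_def using compact_PiE_atLeastAtMost[of "\<lambda>_. 0"]
    by (intro compact_Int_closed) auto
  have in_\<Delta>: "l \<in> \<Delta> \<longleftrightarrow> (\<forall>a\<in>T. 0 \<le> l a) \<and> (\<forall>a. a \<notin> T \<longrightarrow> l a = 0) \<and> sum l T = 1" for l
  proof
    assume l: "(\<forall>a\<in>T. 0 \<le> l a) \<and> (\<forall>a. a \<notin> T \<longrightarrow> l a = 0) \<and> sum l T = 1"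
    then have "l a \<le> 1" if "a \<in> T" for a
      using that assms member_le_sum[of a T l] by auto
    then show "l \<in> \<Delta>" using l unfolding \<Delta>_def by auto
  qed (auto simp: \<Delta>_def PiE_iff split: if_splits)
  define comb where "comb l i = (\<Sum>a\<in>T. l a * real_of_int (a i))" for l i
  define f where "f l = (\<Sum>i<d. (comb l i)\<^sup>2)" for l
  have "continuous_on \<Delta> f" unfolding f_def comb_def
    by (intro continuous_intros continuous_on_product_coordinates
        continuous_on_subset[OF continuous_on_product_coordinates]) auto
  moreover have "(\<lambda>a. if a = a0 then 1 else 0) \<in> \<Delta>" using a0 assms by (simp add: in_\<Delta>)
  ultimately obtain l where l: "l \<in> \<Delta>" and l_min: "\<forall>l'\<in>\<Delta>. f l \<le> f l'"
    using continuous_attains_inf[OF \<open>compact \<Delta>\<close>] by blast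
  show ?thesis
  proof (cases "\<forall>i<d. comb l i = 0")
    case True
    then show ?thesis using l zero_combination by (auto simp: in_\<Delta> comb_def)
  next
    case False
    have "0 < pairing d b (\<lambda>i. if i < d then comb l i else 0)" if b: "b \<in> T" for b
    proof (rule ccontr)
      assume "\<not> ?thesis"
      then have "(\<Sum>i<d. real_of_int (b i) * comb l i) \<le> 0" by (simp add: pairing_def)
      moreover have "\<exists>i<d. comb l i \<noteq> 0" using False by blast
      ultimately obtain t where t: "0 < t" "t \<le> 1"
        and less: "(\<Sum>i<d. ((1 - t) * comb l i + t * b i)\<^sup>2) < f l"
        using sum_sq_convex_step_lt[where b = "\<lambda>i. real_of_int (b i)" and c = "comb l"] unfolding f_def by blast
      define l' where "l' a = (1 - t) * l a + t * (if a = b then 1 else 0)" for a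
      have "l' \<in> \<Delta>"
        using l t b assms unfolding in_\<Delta> by (auto simp: l'_def sum.distrib sum_distrib_left[symmetric])
      moreover have "comb l' i = (1 - t) * comb l i + t * b i" for i
      proof -
        have "comb l' i = (\<Sum>a\<in>T. (1 - t) * (l a * a i) + t * (if a = b then real_of_int (b i) else 0))"
          unfolding comb_def l'_def by (rule sum.cong) (auto simp: algebra_simps)
        then show ?thesis
          using b assms by (simp add: sum.distrib sum_distrib_left[symmetric] comb_def)
      qed
      ultimately show False using less l_min unfolding f_def by fastforce
    qed
    then show ?thesis by (intro positive[of "\<lambda>i. if i < d then comb l i else 0"]) (auto simp: Rd_def)
  qed
qed

section \<open>Integral kernels and unimodular clearing\<close>

text \<open>Eliminating the last coordinate with an integer combination keeps everything integral.\<close>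
lemma int_kernel_vector:
  fixes u :: "nat \<Rightarrow> real"
  assumes "\<forall>a\<in>T. pairing m a u = 0" "\<exists>i<m. u i \<noteq> 0"
  shows "\<exists>v :: nat \<Rightarrow> int. (\<forall>a\<in>T. (\<Sum>i<m. a i * v i) = 0) \<and> (\<exists>i<m. v i \<noteq> 0)"
  using assms
proof (induction m arbitrary: T u)
  case 0
  then show ?case by auto
next
  case (Suc m)
  show ?case
  proof (cases "\<forall>a\<in>T. a m = 0")
    case True
    have "(\<Sum>i<Suc m. a i * unit_dual m i) = 0" if "a \<in> T" for a
      using True that by (simp add: unit_dual_def)
    then show ?thesis by (intro exI[of _ "unit_dual m"]) (auto simp: unit_dual_def)
  next
    case False
    then obtain a0 where a0: "a0 \<in> T" "a0 m \<noteq> 0" by auto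
    define T' where "T' = (\<lambda>a i. a0 m * a i - a m * a0 i) ` T"
    have "pairing m a' u = 0" if a': "a' \<in> T'" for a'
    proof -
      obtain a where a: "a \<in> T" "a' = (\<lambda>i. a0 m * a i - a m * a0 i)" using a' unfolding T'_def by blast
      have "pairing m a' u = a0 m * pairing m a u - a m * pairing m a0 u"
        unfolding a(2) pairing_def by (simp add: sum_distrib_left sum_subtractf[symmetric] algebra_simps)
      moreover have "pairing m a u = - (a m * u m)" "pairing m a0 u = - (a0 m * u m)"
        using Suc.prems(1) a(1) a0(1) by (simp_all add: pairing_Suc eq_neg_iff_add_eq_0)
      ultimately show ?thesis by simp
    qed
    moreover have "\<exists>i<m. u i \<noteq> 0"
    proof (rule ccontr)
      assume zero: "\<not> ?thesis"
      then have "pairing m a0 u = 0" by (simp add: pairing_def)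
      moreover have "pairing (Suc m) a0 u = 0" using Suc.prems(1) a0(1) by blast
      ultimately have "u m = 0" using a0(2) by (simp add: pairing_Suc)
      then show False using Suc.prems(2) zero less_Suc_eq by auto
    qed
    ultimately obtain v' where v': "\<forall>a\<in>T'. (\<Sum>i<m. a i * v' i) = 0" "\<exists>i<m. v' i \<noteq> 0"
      using Suc.IH by blast
    define v where "v i = (if i < m then a0 m * v' i else if i = m then - (\<Sum>j<m. a0 j * v' j) else 0)" for i
    show ?thesis
    proof (intro exI[of _ v] conjI ballI)
      fix a assume a: "a \<in> T"
      have "(\<Sum>i<Suc m. a i * v i) = (\<Sum>i<m. (a0 m * a i - a m * a0 i) * v' i)"
        by (simp add: v_def sum_distrib_left sum_subtractf algebra_simps)
      then show "(\<Sum>i<Suc m. a i * v i) = 0" using v'(1) a unfolding T'_def by auto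
    next
      show "\<exists>i<Suc m. v i \<noteq> 0" using v'(2) a0(2) by (auto simp: v_def)
    qed
  qed
qed

definition mat_mult :: "nat \<Rightarrow> (nat \<Rightarrow> nat \<Rightarrow> int) \<Rightarrow> (nat \<Rightarrow> nat \<Rightarrow> int) \<Rightarrow> nat \<Rightarrow> nat \<Rightarrow> int" where
  "mat_mult d A B = (\<lambda>i k. \<Sum>j<d. A i j * B j k)"

definition mat_vec :: "nat \<Rightarrow> (nat \<Rightarrow> nat \<Rightarrow> int) \<Rightarrow> (nat \<Rightarrow> int) \<Rightarrow> nat \<Rightarrow> int" where
  "mat_vec d A v = (\<lambda>i. \<Sum>j<d. A i j * v j)"

definition id_mat :: "nat \<Rightarrow> nat \<Rightarrow> int" where
  "id_mat = (\<lambda>i k. if i = k then 1 else 0)"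

definition inverse_mats :: "nat \<Rightarrow> (nat \<Rightarrow> nat \<Rightarrow> int) \<Rightarrow> (nat \<Rightarrow> nat \<Rightarrow> int) \<Rightarrow> bool" where
  "inverse_mats d M N \<longleftrightarrow>
     (\<forall>i<d. \<forall>k<d. mat_mult d M N i k = id_mat i k) \<and> (\<forall>i<d. \<forall>k<d. mat_mult d N M i k = id_mat i k)"

lemma mat_mult_assoc: "mat_mult d (mat_mult d A B) C = mat_mult d A (mat_mult d B C)"
  unfolding mat_mult_def by (auto simp: sum_distrib_left sum_distrib_right mult.assoc intro!: ext sum.swap)

lemma mat_vec_mat_mult: "mat_vec d (mat_mult d A B) v = mat_vec d A (mat_vec d B v)"
  unfolding mat_mult_def mat_vec_def
  by (auto simp: sum_distrib_left sum_distrib_right mult.assoc intro!: ext sum.swap)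

lemma mat_mult_id_left:
  assumes "\<forall>i<d. \<forall>k<d. B i k = id_mat i k" "i < d"
  shows "mat_mult d B X i k = X i k"
proof -
  have "mat_mult d B X i k = (\<Sum>j<d. if j = i then X i k else 0)"
    unfolding mat_mult_def using assms by (intro sum.cong) (auto simp: id_mat_def)
  then show ?thesis using assms by simp
qed

lemma mat_vec_id_left:
  assumes "\<forall>i<d. \<forall>k<d. B i k = id_mat i k" "i < d"
  shows "mat_vec d B v i = v i"
proof -
  have "mat_vec d B v i = (\<Sum>j<d. if j = i then v i else 0)"
    unfolding mat_vec_def using assms by (intro sum.cong) (auto simp: id_mat_def)
  then show ?thesis using assms by simp
qed

lemma inverse_mats_id: "inverse_mats d id_mat id_mat"
  unfolding inverse_mats_def using mat_mult_id_left[of d id_mat] by auto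

lemma inverse_mats_mult:
  assumes "inverse_mats d M1 N1" "inverse_mats d M2 N2"
  shows "inverse_mats d (mat_mult d M2 M1) (mat_mult d N1 N2)"
proof -
  have cancel: "mat_mult d (mat_mult d A2 A1) (mat_mult d B1 B2) i k = id_mat i k"
    if "inverse_mats d A1 B1" "inverse_mats d A2 B2" "i < d" "k < d" for A1 B1 A2 B2 i k
  proof -
    have "mat_mult d (mat_mult d A2 A1) (mat_mult d B1 B2) i k = mat_mult d A2 (mat_mult d (mat_mult d A1 B1) B2) i k"
      by (simp add: mat_mult_assoc)
    also have "\<dots> = mat_mult d A2 B2 i k"
      unfolding mat_mult_def[of d A2] using that(1) mat_mult_id_left[of d "mat_mult d A1 B1" _ B2]
      by (intro sum.cong) (auto simp: inverse_mats_def)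
    finally show ?thesis using that(2-4) by (simp add: inverse_mats_def)
  qed
  have inv: "inverse_mats d N1 M1" "inverse_mats d N2 M2" using assms by (auto simp: inverse_mats_def)
  show ?thesis unfolding inverse_mats_def[of d "mat_mult d M2 M1"]
    using cancel[OF assms] cancel[OF inv(2) inv(1)] by blast
qed

definition shear :: "nat \<Rightarrow> nat \<Rightarrow> int \<Rightarrow> nat \<Rightarrow> nat \<Rightarrow> int" where
  "shear i j k = (\<lambda>r c. id_mat r c + (if r = i \<and> c = j then k else 0))"

lemma mat_mult_shear:
  assumes "i \<noteq> j" "i < d" "j < d" "r < d"
  shows "mat_mult d (shear i j k) (shear i j k') r c = id_mat r c + (if r = i \<and> c = j then k + k' else 0)"
proof -
  have "mat_mult d (shear i j k) (shear i j k') r c =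
     (\<Sum>l<d. (if l = r then id_mat r c else 0) + (if l = r then (if l = i \<and> c = j then k' else 0) else 0)
        + (if l = j then (if r = i then k * id_mat j c else 0) else 0))"
    unfolding mat_mult_def shear_def using assms by (intro sum.cong) (auto simp: id_mat_def)
  also have "\<dots> = id_mat r c + (if r = i \<and> c = j then k' else 0) + (if r = i then k * id_mat j c else 0)"
    using assms by (simp add: sum.distrib)
  finally show ?thesis by (auto simp: id_mat_def)
qed

lemma inverse_mats_shear: "i \<noteq> j \<Longrightarrow> i < d \<Longrightarrow> j < d \<Longrightarrow> inverse_mats d (shear i j k) (shear i j (- k))"
  unfolding inverse_mats_def using mat_mult_shear by auto

lemma mat_vec_shear:
  assumes "i \<noteq> j" "i < d" "j < d" "r < d"
  shows "mat_vec d (shear i j k) v r = (v(i := v i + k * v j)) r"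
proof -
  have "mat_vec d (shear i j k) v r
      = (\<Sum>l<d. (if l = r then v r else 0) + (if l = j then (if r = i then k * v j else 0) else 0))"
    unfolding mat_vec_def shear_def using assms by (intro sum.cong) (auto simp: id_mat_def)
  also have "\<dots> = v r + (if r = i then k * v j else 0)" using assms by (simp add: sum.distrib)
  finally show ?thesis by auto
qed

lemma abs_add_sign_mult:
  fixes a b :: int
  assumes "\<bar>b\<bar> \<le> \<bar>a\<bar>"
  shows "\<bar>a + (if (a > 0) = (b > 0) then -1 else 1) * b\<bar> = \<bar>a\<bar> - \<bar>b\<bar>"
  using assms by (cases "(a > 0) = (b > 0)") (simp_all add: abs_if, arith+)

lemma sum_abs_fun_upd:
  fixes v :: "nat \<Rightarrow> int"
  assumes "i < e"
  shows "(\<Sum>r<e. \<bar>(v(i := x)) r\<bar>) = (\<Sum>r<e. \<bar>v r\<bar>) - \<bar>v i\<bar> + \<bar>x\<bar>"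
proof -
  have "(\<Sum>r<e. \<bar>(v(i := x)) r\<bar>) = \<bar>x\<bar> + (\<Sum>r\<in>{..<e}-{i}. \<bar>v r\<bar>)"
    using assms by (simp add: sum.remove[of "{..<e}" i])
  moreover have "(\<Sum>r<e. \<bar>v r\<bar>) = \<bar>v i\<bar> + (\<Sum>r\<in>{..<e}-{i}. \<bar>v r\<bar>)"
    using assms by (simp add: sum.remove[of "{..<e}" i])
  ultimately show ?thesis by simp
qed

text \<open>Each clearing step is a Euclid step between an entry \<open>v i\<close>, \<open>i < e\<close>, and \<open>v e\<close>, or moves
  \<open>v i\<close> into an empty last slot; the weight 2 makes the measure drop in all cases.\<close>
definition clearing_measure :: "nat \<Rightarrow> (nat \<Rightarrow> int) \<Rightarrow> nat" where
  "clearing_measure e v = nat (2 * (\<Sum>r<e. \<bar>v r\<bar>) + \<bar>v e\<bar>)"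

lemma clearing_measure_cong: "(\<And>r. r < Suc e \<Longrightarrow> v r = w r) \<Longrightarrow> clearing_measure e v = clearing_measure e w"
  unfolding clearing_measure_def by (auto intro!: sum.cong arg_cong[where f = nat])

lemma mat_vec_shear_swap:
  assumes "i < e" "v e = 0" "r < Suc e"
  shows "mat_vec (Suc e) (mat_mult (Suc e) (shear i e (-1)) (shear e i 1)) v r = (v(e := v i, i := 0)) r"
proof -
  have "i \<noteq> e" "e \<noteq> i" "i < Suc e" "e < Suc e" using assms by auto
  then show ?thesis
    using assms mat_vec_shear[of i e "Suc e"] mat_vec_shear[of e i "Suc e" _ 1 v]
    by (simp add: mat_vec_mat_mult)
qed

lemma clearing_step:
  assumes i: "i < e" "v i \<noteq> 0"
  obtains S S' where "inverse_mats (Suc e) S S'"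
    "clearing_measure e (mat_vec (Suc e) S v) < clearing_measure e v"
proof -
  have ie: "i \<noteq> e" "e \<noteq> i" "i < Suc e" "e < Suc e" using i by auto
  have vi_le: "\<bar>v i\<bar> \<le> (\<Sum>r<e. \<bar>v r\<bar>)" by (rule member_le_sum) (use i in auto)
  define \<sigma> :: int where "\<sigma> = (if (v i > 0) = (v e > 0) then -1 else 1)"
  consider "v e = 0" | "v e \<noteq> 0" "\<bar>v e\<bar> \<le> \<bar>v i\<bar>" | "\<bar>v i\<bar> < \<bar>v e\<bar>" by linarith
  then show ?thesis
  proof cases
    case 1
    define S where "S = mat_mult (Suc e) (shear i e (-1)) (shear e i 1)"
    have "clearing_measure e (mat_vec (Suc e) S v) = clearing_measure e (v(e := v i, i := 0))"
      unfolding S_def using mat_vec_shear_swap[where v = v, OF i(1) 1] by (intro clearing_measure_cong) auto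
    also have "\<dots> < clearing_measure e v"
      using sum_abs_fun_upd[OF i(1), of "v(e := v i)" 0] ie i(2) vi_le 1 by (simp add: clearing_measure_def)
    finally show ?thesis
      using that inverse_mats_mult[OF inverse_mats_shear[OF ie(2,4,3)] inverse_mats_shear[OF ie(1,3,4)]]
      unfolding S_def by blast
  next
    case 2
    have "clearing_measure e (mat_vec (Suc e) (shear i e \<sigma>) v) = clearing_measure e (v(i := v i + \<sigma> * v e))"
      using mat_vec_shear[OF ie(1,3,4)] by (intro clearing_measure_cong) auto
    also have "\<dots> < clearing_measure e v"
      using sum_abs_fun_upd[OF i(1)] abs_add_sign_mult[OF 2(2)] 2(1) ie(1) vi_le
      by (simp add: clearing_measure_def \<sigma>_def)
    finally show ?thesis using that inverse_mats_shear[OF ie(1,3,4)] by blast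
  next
    case 3
    have "clearing_measure e (mat_vec (Suc e) (shear e i \<sigma>) v) = clearing_measure e (v(e := v e + \<sigma> * v i))"
      using mat_vec_shear[OF ie(2,4,3)] by (intro clearing_measure_cong) auto
    also have "\<dots> < clearing_measure e v"
    proof -
      have "\<sigma> = (if (v e > 0) = (v i > 0) then -1 else 1)" by (auto simp: \<sigma>_def)
      then have "\<bar>v e + \<sigma> * v i\<bar> = \<bar>v e\<bar> - \<bar>v i\<bar>" using abs_add_sign_mult[of "v i" "v e"] 3 by simp
      then show ?thesis using 3 i(2) vi_le by (simp add: clearing_measure_def)
    qed
    finally show ?thesis using that inverse_mats_shear[OF ie(2,4,3)] by blast
  qed
qed

lemma exists_inverse_mats_clearing: "\<exists>M N. inverse_mats (Suc e) M N \<and> (\<forall>i<e. mat_vec (Suc e) M v i = 0)"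
proof (induction "clearing_measure e v" arbitrary: v rule: less_induct)
  case less
  show ?case
  proof (cases "\<forall>i<e. v i = 0")
    case True
    then show ?thesis
      using inverse_mats_id mat_vec_id_left[of "Suc e" id_mat] by (intro exI[of _ id_mat]) auto
  next
    case False
    then obtain i where "i < e" "v i \<noteq> 0" by auto
    then obtain S S' where S: "inverse_mats (Suc e) S S'"
      and dec: "clearing_measure e (mat_vec (Suc e) S v) < clearing_measure e v"
      by (rule clearing_step)
    obtain M N where MN: "inverse_mats (Suc e) M N" "\<forall>i<e. mat_vec (Suc e) M (mat_vec (Suc e) S v) i = 0"
      using less(1)[OF dec] by blast
    show ?thesis
      by (intro exI[of _ "mat_mult (Suc e) M S"] exI[of _ "mat_mult (Suc e) S' N"] conjI
          inverse_mats_mult[OF S MN(1)]) (use MN(2) in \<open>simp add: mat_vec_mat_mult\<close>)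
  qed
qed

section \<open>Tight normals at the Fine core\<close>

lemma finite_dual_norm1_le: "finite {a \<in> dualZd d. norm1 d a \<le> K}"
proof (rule finite_subset)
  define k where "k = \<lceil>K\<rceil>"
  show "{a \<in> dualZd d. norm1 d a \<le> K} \<subseteq> {f. \<forall>i. (i \<in> {..<d} \<longrightarrow> f i \<in> {-k..k}) \<and> (i \<notin> {..<d} \<longrightarrow> f i = 0)}"
  proof
    fix a assume "a \<in> {a \<in> dualZd d. norm1 d a \<le> K}"
    then have a: "a \<in> dualZd d" "norm1 d a \<le> K" by auto
    have "a i \<in> {-k..k}" if "i < d" for i
    proof -
      have "\<bar>real_of_int (a i)\<bar> \<le> K" using abs_le_norm1[OF that, of a] a(2) by simp
      then show ?thesis unfolding k_def by (simp add: abs_le_iff) linarith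
    qed
    moreover have "a i = 0" if "\<not> i < d" for i using a(1) that by (simp add: dualZd_def)
    ultimately show "a \<in> {f. \<forall>i. (i \<in> {..<d} \<longrightarrow> f i \<in> {-k..k}) \<and> (i \<notin> {..<d} \<longrightarrow> f i = 0)}"
      by auto
  qed
  show "finite {f. \<forall>i. (i \<in> {..<d} \<longrightarrow> f i \<in> {-k..k}) \<and> (i \<notin> {..<d} \<longrightarrow> f i = 0)}"
    by (rule finite_set_of_finite_funs) auto
qed

lemma abs_pairing_le_norm1: "\<bar>pairing d a w\<bar> \<le> norm1 d a * (\<Sum>i<d. \<bar>w i\<bar>)"
proof -
  have "\<bar>pairing d a w\<bar> \<le> (\<Sum>i<d. \<bar>real_of_int (a i)\<bar> * \<bar>w i\<bar>)"
    unfolding pairing_def by (rule order.trans[OF sum_abs]) (simp add: abs_mult)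
  also have "\<dots> \<le> (\<Sum>i<d. \<bar>real_of_int (a i)\<bar> * (\<Sum>j<d. \<bar>w j\<bar>))"
    by (intro sum_mono mult_left_mono member_le_sum) auto
  finally show ?thesis by (simp add: norm1_def sum_distrib_right)
qed

lemma pairing_add_scaled: "pairing d a (\<lambda>i. x i + t * w i) = pairing d a x + t * pairing d a w"
  unfolding pairing_def by (simp add: algebra_simps sum.distrib sum_distrib_left)

lemma pairing_midpoint: "pairing d a (\<lambda>i. (x i + y i) / 2) = (pairing d a x + pairing d a y) / 2"
  unfolding pairing_def by (simp add: algebra_simps sum.distrib sum_divide_distrib add_divide_distrib)

lemma pairing_cong_right: "(\<And>i. i < d \<Longrightarrow> x i = x' i) \<Longrightarrow> pairing d a x = pairing d a x'"
  unfolding pairing_def by (rule sum.cong) auto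

definition tight :: "nat \<Rightarrow> (nat \<Rightarrow> real) set \<Rightarrow> real \<Rightarrow> (nat \<Rightarrow> real) \<Rightarrow> (nat \<Rightarrow> int) set" where
  "tight d P s x = {a \<in> dualZd d. (\<exists>i<d. a i \<noteq> 0) \<and> pairing d a x = hP d P a + s}"

lemma midpoint_in_fine_adjoint:
  assumes "x \<in> fine_adjoint d P s" "y \<in> fine_adjoint d P s"
  shows "(\<lambda>i. (x i + y i) / 2) \<in> fine_adjoint d P s"
  unfolding fine_adjoint_def
proof (intro CollectI conjI ballI impI)
  show "(\<lambda>i. (x i + y i) / 2) \<in> Rd d" using assms by (auto simp: fine_adjoint_def Rd_def)
  fix a assume "a \<in> dualZd d" "\<exists>i<d. a i \<noteq> 0"
  then have "hP d P a + s \<le> pairing d a x" "hP d P a + s \<le> pairing d a y"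
    using assms unfolding fine_adjoint_def by blast+
  then show "hP d P a + s \<le> pairing d a (\<lambda>i. (x i + y i) / 2)" by (simp add: pairing_midpoint)
qed

lemma tight_midpoint_imp_tight:
  assumes "x \<in> fine_adjoint d P s" "y \<in> fine_adjoint d P s" "a \<in> tight d P s (\<lambda>i. (x i + y i) / 2)"
  shows "pairing d a x = hP d P a + s" "pairing d a y = hP d P a + s"
proof -
  have a: "a \<in> dualZd d" "\<exists>i<d. a i \<noteq> 0"
    and sum: "pairing d a x + pairing d a y = 2 * hP d P a + 2 * s"
    using assms(3) by (auto simp: tight_def pairing_midpoint)
  have "hP d P a + s \<le> pairing d a x" "hP d P a + s \<le> pairing d a y"
    using assms(1,2) a unfolding fine_adjoint_def by blast+
  with sum show "pairing d a x = hP d P a + s" "pairing d a y = hP d P a + s" by linarith+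
qed

lemma eventually_strict_along_ascent:
  assumes x: "x \<in> fine_adjoint d P s" and w: "\<forall>a\<in>tight d P s x. 0 < pairing d a w"
    and F: "finite F" "\<forall>a\<in>F. a \<in> dualZd d \<and> (\<exists>i<d. a i \<noteq> 0)"
  shows "eventually (\<lambda>\<epsilon>. \<forall>a\<in>F. hP d P a + s < pairing d a x + \<epsilon> * pairing d a w) (at_right 0)"
proof (rule eventually_ball_finite[OF F(1)], rule ballI)
  fix a assume a: "a \<in> F"
  show "eventually (\<lambda>\<epsilon>. hP d P a + s < pairing d a x + \<epsilon> * pairing d a w) (at_right 0)"
  proof (cases "a \<in> tight d P s x")
    case True
    then have "pairing d a x = hP d P a + s" "0 < pairing d a w" using w by (auto simp: tight_def)
    then show ?thesis using eventually_at_right_less[of 0] by (auto elim!: eventually_mono)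
  next
    case False
    then have "hP d P a + s < pairing d a x"
      using x a F(2) unfolding fine_adjoint_def tight_def by fastforce
    moreover have "((\<lambda>\<epsilon>. pairing d a x + \<epsilon> * pairing d a w) \<longlongrightarrow> pairing d a x) (at_right 0)"
      by (auto intro!: tendsto_eq_intros)
    ultimately show ?thesis by (rule order_tendstoD(1)[rotated])
  qed
qed

context lattice_hull
begin

lemma finite_tight:
  assumes "x \<in> fine_adjoint d P s" "s > 0"
  shows "finite (tight d P s x)"
proof -
  obtain \<delta> where \<delta>: "\<delta> > 0" "\<And>a. a \<in> dualZd d \<Longrightarrow> \<delta> * norm1 d a \<le> pairing d a x - hP d P a"
    using fine_adjoint_slack_ge_norm1[OF assms] by blast
  have "norm1 d a \<le> s / \<delta>" if "a \<in> tight d P s x" for a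
  proof -
    have "a \<in> dualZd d" "pairing d a x = hP d P a + s" using that by (auto simp: tight_def)
    then have "\<delta> * norm1 d a \<le> s" using \<delta>(2) by fastforce
    then show ?thesis using \<delta>(1) by (simp add: field_simps)
  qed
  then have "tight d P s x \<subseteq> {a \<in> dualZd d. norm1 d a \<le> s / \<delta>}" by (auto simp: tight_def)
  then show ?thesis using finite_dual_norm1_le finite_subset by blast
qed

text \<open>Pushing \<open>x\<close> a little along \<open>w\<close> makes the finitely many short constraints strict, while the
  slack bound proportional to \<^term>\<open>norm1 d a\<close> keeps all long ones far from tight.\<close>
lemma fine_adjoint_raise_level:
  assumes x: "x \<in> fine_adjoint d P s" and s: "s > 0"
    and w: "w \<in> Rd d" "\<forall>a\<in>tight d P s x. 0 < pairing d a w"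
  obtains \<eta> where "\<eta> > 0" "fine_adjoint d P (s + \<eta>) \<noteq> {}"
proof -
  obtain \<delta> where \<delta>: "\<delta> > 0" "\<And>a. a \<in> dualZd d \<Longrightarrow> \<delta> * norm1 d a \<le> pairing d a x - hP d P a"
    using fine_adjoint_slack_ge_norm1[OF x s] by blast
  define W where "W = (\<Sum>i<d. \<bar>w i\<bar>) + 1"
  have W: "W > 0" unfolding W_def by (simp add: add_nonneg_pos sum_nonneg)
  have pw: "\<bar>pairing d a w\<bar> \<le> norm1 d a * W" for a
    unfolding W_def by (rule order.trans[OF abs_pairing_le_norm1 mult_left_mono]) (simp_all add: norm1_nonneg)
  define F where "F = {a \<in> dualZd d. (\<exists>i<d. a i \<noteq> 0) \<and> norm1 d a \<le> 2 * (s + 1) / \<delta>}"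
  have "finite F" using finite_dual_norm1_le by (rule finite_subset[rotated]) (auto simp: F_def)
  have "eventually (\<lambda>\<epsilon>. \<forall>a\<in>F. hP d P a + s < pairing d a x + \<epsilon> * pairing d a w) (at_right 0)"
    using \<open>finite F\<close> by (rule eventually_strict_along_ascent[OF x w(2)]) (simp add: F_def)
  moreover have "eventually (\<lambda>\<epsilon>. \<epsilon> < \<delta> / (2 * W)) (at_right 0)"
    using order_tendstoD(2)[OF tendsto_ident_at, of 0 "\<delta> / (2 * W)" "{0<..}"] \<delta>(1) W by simp
  ultimately have "eventually (\<lambda>\<epsilon>. (\<forall>a\<in>F. hP d P a + s < pairing d a x + \<epsilon> * pairing d a w)
      \<and> 0 < \<epsilon> \<and> \<epsilon> < \<delta> / (2 * W)) (at_right 0)"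
    using eventually_at_right_less[of 0] by eventually_elim auto
  then obtain \<epsilon> where \<epsilon>: "\<forall>a\<in>F. hP d P a + s < pairing d a x + \<epsilon> * pairing d a w"
    "0 < \<epsilon>" "\<epsilon> < \<delta> / (2 * W)"
    using eventually_happens'[OF trivial_limit_at_right_real] by blast
  define z where "z i = x i + \<epsilon> * w i" for i
  have pz: "pairing d a z = pairing d a x + \<epsilon> * pairing d a w" for a
    unfolding z_def[abs_def] by (rule pairing_add_scaled)
  have far: "hP d P a + s + 1 \<le> pairing d a z" if "a \<in> dualZd d" "a \<notin> F" "\<exists>i<d. a i \<noteq> 0" for a
  proof -
    have "\<bar>\<epsilon> * pairing d a w\<bar> \<le> \<delta> / (2 * W) * (norm1 d a * W)"
      unfolding abs_mult using pw[of a] \<epsilon> by (intro mult_mono) auto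
    also have "\<dots> = \<delta> * norm1 d a / 2" using W by simp
    finally have "2 * pairing d a x - \<delta> * norm1 d a \<le> 2 * pairing d a z"
      unfolding pz by (simp add: abs_le_iff algebra_simps)
    moreover have "2 * s + 2 < \<delta> * norm1 d a" using that \<delta>(1) by (auto simp: F_def field_simps)
    ultimately show ?thesis using \<delta>(2)[OF that(1)] by linarith
  qed
  define \<eta> where "\<eta> = Min (insert 1 ((\<lambda>a. pairing d a z - hP d P a - s) ` F))"
  have "\<eta> > 0" unfolding \<eta>_def using \<open>finite F\<close> \<epsilon>(1) pz by (auto simp: Min_gr_iff)
  have "z \<in> fine_adjoint d P (s + \<eta>)"
    unfolding fine_adjoint_def
  proof (intro CollectI conjI ballI impI)
    show "z \<in> Rd d" using x w(1) by (auto simp: z_def fine_adjoint_def Rd_def)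
    fix a assume a: "a \<in> dualZd d" "\<exists>i<d. a i \<noteq> 0"
    show "hP d P a + (s + \<eta>) \<le> pairing d a z"
    proof (cases "a \<in> F")
      case True
      then have "\<eta> \<le> pairing d a z - hP d P a - s" unfolding \<eta>_def using \<open>finite F\<close> by (intro Min_le) auto
      then show ?thesis by simp
    next
      case False
      have "\<eta> \<le> 1" unfolding \<eta>_def using \<open>finite F\<close> by (intro Min_le) auto
      then show ?thesis using far[OF a(1) False a(2)] by simp
    qed
  qed
  then show ?thesis using that \<open>\<eta> > 0\<close> by blast
qed

lemma fine_core_balanced_tight_normals:
  assumes "d > 0" "full_dim d P" "x \<in> fine_core d P" "y \<in> fine_core d P" "x \<noteq> y"
  defines "n \<equiv> fine_number d P"
  obtains x0 l v where "x0 \<in> fine_core d P" "finite (tight d P n x0)"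
    "\<forall>a\<in>tight d P n x0. 0 \<le> l a" "sum l (tight d P n x0) = 1"
    "\<forall>i<d. (\<Sum>a\<in>tight d P n x0. l a * real_of_int (a i)) = 0"
    "\<exists>i<d. v i \<noteq> 0" "\<forall>a\<in>tight d P n x0. (\<Sum>i<d. a i * v i) = 0"
proof -
  have n: "n > 0" unfolding n_def using fine_number_pos assms(1,2) .
  have x: "x \<in> fine_adjoint d P n" and y: "y \<in> fine_adjoint d P n"
    using assms(3,4) by (simp_all add: fine_core_def n_def)
  define x0 where "x0 i = (x i + y i) / 2" for i
  have x0: "x0 \<in> fine_adjoint d P n" unfolding x0_def[abs_def] by (rule midpoint_in_fine_adjoint[OF x y])
  define T where "T = tight d P n x0"
  have "finite T" unfolding T_def by (rule finite_tight[OF x0 n])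
  obtain l where "\<forall>a\<in>T. 0 \<le> l a" "sum l T = 1" "\<forall>i<d. (\<Sum>a\<in>T. l a * real_of_int (a i)) = 0"
  proof (rule gordan_alternative[OF \<open>finite T\<close>, of d])
    fix w assume "w \<in> Rd d" "\<forall>a\<in>T. 0 < pairing d a w"
    then obtain \<eta> where "\<eta> > 0" "fine_adjoint d P (n + \<eta>) \<noteq> {}"
      using fine_adjoint_raise_level[OF x0 n] unfolding T_def by blast
    then have "n + \<eta> \<in> fine_levels d P" using n by (simp add: fine_levels_def)
    then have "n + \<eta> \<le> n" unfolding n_def by (rule le_fine_number[OF assms(1)])
    then show ?thesis using \<open>\<eta> > 0\<close> by simp
  qed
  moreover obtain v where "\<forall>a\<in>T. (\<Sum>i<d. a i * v i) = 0" "\<exists>i<d. v i \<noteq> 0"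
  proof -
    have "pairing d a (\<lambda>i. y i - x i) = 0" if "a \<in> T" for a
      using tight_midpoint_imp_tight[OF x y, of a] that
      by (simp add: T_def x0_def[abs_def] pairing_def sum_subtractf algebra_simps)
    moreover have "\<exists>i<d. y i - x i \<noteq> 0"
    proof (rule ccontr)
      assume "\<not> ?thesis"
      then have "y i = x i" for i using x y by (cases "i < d") (auto simp: fine_adjoint_def Rd_def)
      then show False using assms(5) by auto
    qed
    ultimately show ?thesis using int_kernel_vector[of T d "\<lambda>i. y i - x i"] that by blast
  qed
  moreover have "x0 \<in> fine_core d P" using x0 by (simp add: fine_core_def n_def)
  ultimately show ?thesis using that \<open>finite T\<close> unfolding T_def by blast
qed

end

lemma pairing_convex_weights_zero:
  assumes "\<forall>i<d. (\<Sum>a\<in>T. l a * real_of_int (a i)) = 0"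
  shows "(\<Sum>a\<in>T. l a * pairing d a x) = 0"
proof -
  have "(\<Sum>a\<in>T. l a * pairing d a x) = (\<Sum>i<d. (\<Sum>a\<in>T. l a * real_of_int (a i)) * x i)"
    unfolding pairing_def by (simp add: sum_distrib_left sum_distrib_right sum.swap[of _ T "{..<d}"] mult.assoc)
  then show ?thesis using assms by simp
qed

lemma balanced_tight_normals_bound:
  assumes "\<forall>a\<in>T. 0 \<le> l a" "sum l T = 1" "\<forall>i<d. (\<Sum>a\<in>T. l a * real_of_int (a i)) = 0"
    and "\<forall>a\<in>T. pairing d a x0 = h a + n" "\<forall>a\<in>T. h a + s \<le> pairing d a y"
  shows "s \<le> n"
proof -
  have "(\<Sum>a\<in>T. l a * h a) + s = (\<Sum>a\<in>T. l a * (h a + s))"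
    using assms(2) by (simp add: distrib_left sum.distrib sum_distrib_right[symmetric])
  also have "\<dots> \<le> (\<Sum>a\<in>T. l a * pairing d a y)"
    using assms(1,5) by (intro sum_mono mult_left_mono) auto
  also have "\<dots> = (\<Sum>a\<in>T. l a * pairing d a x0)"
    using pairing_convex_weights_zero[OF assms(3)] by simp
  also have "\<dots> = (\<Sum>a\<in>T. l a * h a) + n"
    using assms(2,4) by (simp add: distrib_left sum.distrib sum_distrib_right[symmetric])
  finally show ?thesis by simp
qed

section \<open>Projection along an integral direction\<close>

definition proj :: "nat \<Rightarrow> nat \<Rightarrow> (nat \<Rightarrow> nat \<Rightarrow> int) \<Rightarrow> (nat \<Rightarrow> real) \<Rightarrow> nat \<Rightarrow> real" where
  "proj d e M x = (\<lambda>i. if i < e then (\<Sum>j<d. real_of_int (M i j) * x j) else 0)"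

definition proj_dual :: "nat \<Rightarrow> nat \<Rightarrow> (nat \<Rightarrow> nat \<Rightarrow> int) \<Rightarrow> (nat \<Rightarrow> int) \<Rightarrow> nat \<Rightarrow> int" where
  "proj_dual d e M b = (\<lambda>j. if j < d then (\<Sum>i<e. b i * M i j) else 0)"

lemma pairing_proj: "pairing e b (proj d e M x) = pairing d (proj_dual d e M b) x"
  unfolding pairing_def proj_def proj_dual_def
  by (simp add: sum_distrib_left sum_distrib_right sum.swap[of _ "{..<e}" "{..<d}"] mult.assoc)

lemma dot_proj: "dot e c (proj d e M x) = dot d (\<lambda>j. \<Sum>i<e. c i * real_of_int (M i j)) x"
  unfolding dot_def proj_def
  by (simp add: sum_distrib_left sum_distrib_right sum.swap[of _ "{..<e}" "{..<d}"] mult.assoc)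

lemma proj_dual_in_dualZd: "proj_dual d e M b \<in> dualZd d"
  by (simp add: proj_dual_def dualZd_def)

lemma proj_in_Zd: "x \<in> Zd d \<Longrightarrow> proj d e M x \<in> Zd e"
  unfolding proj_def Zd_def Rd_def by (auto intro!: Ints_sum Ints_mult)

lemma proj_dual_cong: "(\<And>i. i < e \<Longrightarrow> b i = b' i) \<Longrightarrow> proj_dual d e M b = proj_dual d e M b'"
  unfolding proj_dual_def by (auto intro!: sum.cong)

lemma real_mat_mult: "real_of_int (mat_mult d M N i k) = (\<Sum>j<d. real_of_int (M i j) * real_of_int (N j k))"
  unfolding mat_mult_def by simp

lemma inverse_mats_rows_independent:
  fixes c :: "nat \<Rightarrow> real"
  assumes "inverse_mats d M N" "e \<le> d" "\<forall>j<d. (\<Sum>i<e. c i * real_of_int (M i j)) = 0" "k < e"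
  shows "c k = 0"
proof -
  have "0 = (\<Sum>j<d. (\<Sum>i<e. c i * real_of_int (M i j)) * real_of_int (N j k))" using assms(3) by simp
  also have "\<dots> = (\<Sum>i<e. c i * (\<Sum>j<d. real_of_int (M i j) * real_of_int (N j k)))"
    by (simp add: sum_distrib_left sum_distrib_right sum.swap[of _ "{..<e}" "{..<d}"] mult.assoc)
  also have "\<dots> = (\<Sum>i<e. if i = k then c k else 0)"
    using assms(1,2,4) by (intro sum.cong) (auto simp: inverse_mats_def real_mat_mult[symmetric] id_mat_def)
  finally show ?thesis using assms(4) by simp
qed

lemma proj_dual_nonzero:
  assumes "inverse_mats d M N" "e \<le> d" "\<exists>i<e. b i \<noteq> 0"
  shows "\<exists>j<d. proj_dual d e M b j \<noteq> 0"
proof (rule ccontr)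
  assume "\<not> ?thesis"
  then have "\<forall>j<d. (\<Sum>i<e. real_of_int (b i) * real_of_int (M i j)) = 0"
    unfolding proj_dual_def by (auto simp flip: of_int_mult of_int_sum)
  then show False
    using inverse_mats_rows_independent[OF assms(1,2), where c = "\<lambda>i. real_of_int (b i)"] assms(3) by auto
qed

lemma proj_section:
  assumes "inverse_mats d M N" "e \<le> d" "i < e"
  shows "proj d e M (\<lambda>j. \<Sum>k<e. real_of_int (N j k) * y k) i = y i"
proof -
  have "proj d e M (\<lambda>j. \<Sum>k<e. real_of_int (N j k) * y k) i
      = (\<Sum>k<e. (\<Sum>j<d. real_of_int (M i j) * real_of_int (N j k)) * y k)"
    unfolding proj_def using assms(3)
    by (simp add: sum_distrib_left sum_distrib_right sum.swap[of _ "{..<e}" "{..<d}"] mult.assoc)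
  also have "\<dots> = (\<Sum>k<e. if k = i then y k else 0)"
    using assms by (intro sum.cong) (auto simp: inverse_mats_def real_mat_mult[symmetric] id_mat_def)
  finally show ?thesis using assms(3) by simp
qed

lemma proj_dual_lift:
  assumes "inverse_mats (Suc e) M N" "a \<in> dualZd (Suc e)" "(\<Sum>k<Suc e. a k * N k e) = 0"
  shows "proj_dual (Suc e) e M (\<lambda>i. \<Sum>k<Suc e. a k * N k i) = a"
proof
  fix j
  show "proj_dual (Suc e) e M (\<lambda>i. \<Sum>k<Suc e. a k * N k i) j = a j"
  proof (cases "j < Suc e")
    case True
    have "proj_dual (Suc e) e M (\<lambda>i. \<Sum>k<Suc e. a k * N k i) j = (\<Sum>i<e. (\<Sum>k<Suc e. a k * N k i) * M i j)"
      by (simp only: proj_dual_def if_P[OF True])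
    also have "\<dots> = (\<Sum>k<Suc e. a k * (\<Sum>i<e. N k i * M i j))"
      unfolding sum_distrib_right sum_distrib_left mult.assoc by (rule sum.swap)
    also have "\<dots> = (\<Sum>k<Suc e. a k * (id_mat k j - N k e * M e j))"
    proof (rule sum.cong)
      fix k assume "k \<in> {..<Suc e}"
      then have "(\<Sum>i<Suc e. N k i * M i j) = id_mat k j"
        using assms(1) True by (auto simp: inverse_mats_def mat_mult_def)
      then show "a k * (\<Sum>i<e. N k i * M i j) = a k * (id_mat k j - N k e * M e j)" by simp
    qed simp
    also have "\<dots> = (\<Sum>k<Suc e. a k * id_mat k j) - (\<Sum>k<Suc e. a k * N k e) * M e j"
      by (simp only: right_diff_distrib sum_subtractf sum_distrib_right mult.assoc)
    also have "\<dots> = a j"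
      using assms(3) True by (simp add: id_mat_def if_distrib[of "\<lambda>c. _ * c"] cong: if_cong)
    finally show ?thesis .
  next
    case False
    then show ?thesis using assms(2) by (simp add: proj_dual_def dualZd_def)
  qed
qed

lemma clearing_last_column:
  assumes "inverse_mats (Suc e) M N" "\<forall>i<e. mat_vec (Suc e) M v i = 0" "\<exists>i<Suc e. v i \<noteq> 0"
    "(\<Sum>i<Suc e. a i * v i) = 0"
  shows "(\<Sum>k<Suc e. a k * N k e) = 0"
proof -
  define c where "c = mat_vec (Suc e) M v e"
  have v: "v k = N k e * c" if "k < Suc e" for k
  proof -
    have "v k = mat_vec (Suc e) (mat_mult (Suc e) N M) v k"
      using mat_vec_id_left[of "Suc e" "mat_mult (Suc e) N M" k v] assms(1) that
      by (simp add: inverse_mats_def)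
    also have "\<dots> = (\<Sum>j<Suc e. N k j * mat_vec (Suc e) M v j)"
      by (simp only: mat_vec_mat_mult mat_vec_def[of _ N])
    also have "\<dots> = (\<Sum>j<Suc e. if j = e then N k e * c else 0)"
      using assms(2) by (intro sum.cong) (auto simp: less_Suc_eq c_def)
    finally show ?thesis by simp
  qed
  then have "c \<noteq> 0" using assms(3) by auto
  have "c * (\<Sum>k<Suc e. a k * N k e) = (\<Sum>k<Suc e. a k * v k)"
    unfolding sum_distrib_left by (rule sum.cong) (simp_all add: v)
  then show ?thesis using assms(4) \<open>c \<noteq> 0\<close> by simp
qed

context lattice_hull
begin

lemma proj_lattice_hull: "lattice_hull e (proj d e M ` V)"
  using finite_V V_nonempty V_lattice proj_in_Zd by unfold_locales auto

lemma hP_proj: "hP e (conv (proj d e M ` V)) b = hP d P (proj_dual d e M b)"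
proof -
  have "hP e (conv (proj d e M ` V)) b = Min (pairing e b ` proj d e M ` V)"
    using finite_V V_nonempty by (intro hP_conv_eq_Min) auto
  also have "pairing e b ` proj d e M ` V = pairing d (proj_dual d e M b) ` V"
    by (auto simp: pairing_proj image_image)
  finally show ?thesis using hP_conv_eq_Min[OF finite_V V_nonempty] by simp
qed

lemma full_dim_proj:
  assumes "full_dim d P" "inverse_mats d M N" "e \<le> d"
  shows "full_dim e (conv (proj d e M ` V))"
  unfolding full_dim_iff_dot
proof
  assume "\<exists>c b. (\<exists>i<e. c i \<noteq> 0) \<and> (\<forall>x\<in>conv (proj d e M ` V). dot e c x = b)"
  then obtain c b where c: "\<exists>i<e. c i \<noteq> 0" and const: "\<forall>x\<in>conv (proj d e M ` V). dot e c x = b"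
    by blast
  define c' where "c' = (\<lambda>j. \<Sum>i<e. c i * real_of_int (M i j))"
  have "\<forall>u\<in>V. dot d c' u = b"
  proof
    fix u assume "u \<in> V"
    then have "proj d e M u \<in> conv (proj d e M ` V)" using conv_superset finite_V by blast
    then have "dot e c (proj d e M u) = b" using const by blast
    then show "dot d c' u = b" by (simp add: dot_proj c'_def)
  qed
  then have "\<forall>x\<in>P. dot d c' x = b" using dot_conv_eq by blast
  then have "\<not> (\<exists>j<d. c' j \<noteq> 0)" using assms(1) unfolding full_dim_iff_dot by blast
  then show False using inverse_mats_rows_independent[OF assms(2,3), of c] c by (auto simp: c'_def)
qed

lemma proj_in_fine_adjoint:
  assumes "x \<in> fine_adjoint d P s" "inverse_mats d M N" "e \<le> d"
  shows "proj d e M x \<in> fine_adjoint e (conv (proj d e M ` V)) s"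
  unfolding fine_adjoint_def
proof (intro CollectI conjI ballI impI)
  show "proj d e M x \<in> Rd e" by (simp add: proj_def Rd_def)
  fix b assume "b \<in> dualZd e" "\<exists>i<e. b i \<noteq> 0"
  then have "hP d P (proj_dual d e M b) + s \<le> pairing d (proj_dual d e M b) x"
    using assms proj_dual_in_dualZd proj_dual_nonzero unfolding fine_adjoint_def by blast
  then show "hP e (conv (proj d e M ` V)) b + s \<le> pairing e b (proj d e M x)"
    by (simp add: hP_proj pairing_proj)
qed

lemma fine_levels_proj_le:
  assumes "d = Suc e" "inverse_mats d M N" "s \<in> fine_levels e (conv (proj d e M ` V))"
    and T: "\<forall>a\<in>T. a \<in> dualZd d \<and> (\<exists>i<d. a i \<noteq> 0) \<and> pairing d a x0 = hP d P a + n"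
      "\<forall>a\<in>T. (\<Sum>k<d. a k * N k e) = 0"
    and l: "\<forall>a\<in>T. 0 \<le> l a" "sum l T = 1" "\<forall>i<d. (\<Sum>a\<in>T. l a * real_of_int (a i)) = 0"
  shows "s \<le> n"
proof -
  obtain y where y: "y \<in> fine_adjoint e (conv (proj d e M ` V)) s"
    using assms(3) by (auto simp: fine_levels_def)
  define x where "x j = (\<Sum>k<e. real_of_int (N j k) * y k)" for j
  have "hP d P a + s \<le> pairing d a x" if "a \<in> T" for a
  proof -
    define b where "b i = (if i < e then \<Sum>k<d. a k * N k i else 0)" for i
    have "proj_dual d e M b = proj_dual d e M (\<lambda>i. \<Sum>k<Suc e. a k * N k i)"
      by (rule proj_dual_cong) (simp add: b_def assms(1))
    also have "\<dots> = a" using proj_dual_lift[of e M N a] assms(1,2) T that by simp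
    finally have ba: "proj_dual d e M b = a" .
    have "b \<in> dualZd e" by (simp add: b_def dualZd_def)
    moreover have "\<exists>i<e. b i \<noteq> 0"
    proof (rule ccontr)
      assume "\<not> ?thesis"
      then have "proj_dual d e M b = proj_dual d e M (\<lambda>_. 0)" by (intro proj_dual_cong) auto
      moreover have "proj_dual d e M (\<lambda>_. 0) = (\<lambda>_. 0)" by (simp add: proj_dual_def fun_eq_iff)
      ultimately have "a = (\<lambda>_. 0)" using ba by simp
      then show False using T that by auto
    qed
    ultimately have "hP e (conv (proj d e M ` V)) b + s \<le> pairing e b y"
      using y unfolding fine_adjoint_def by blast
    moreover have "pairing e b y = pairing e b (proj d e M x)"
      using proj_section[OF assms(2)] assms(1) unfolding x_def[abs_def] by (intro pairing_cong_right) simp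
    ultimately show ?thesis by (simp add: hP_proj pairing_proj ba)
  qed
  then show ?thesis using balanced_tight_normals_bound[OF l, of x0 "hP d P" n s x] T by auto
qed

lemma exists_lower_dim_same_fine_number:
  assumes "d = Suc e" "full_dim d P" "\<not> (\<exists>x. fine_core d P = {x})"
  obtains Q where "lattice_polytope e Q" "full_dim e Q" "fine_number e Q = fine_number d P"
proof -
  define n where "n = fine_number d P"
  have n: "n > 0" unfolding n_def using fine_number_pos assms(1,2) by simp
  have "d > 0" using assms(1) by simp
  obtain x where x: "x \<in> fine_core d P" using fine_core_nonempty[OF \<open>d > 0\<close> assms(2)] by blast
  then obtain y where y: "y \<in> fine_core d P" "x \<noteq> y" using assms(3) by blast
  obtain x0 l v where x0: "x0 \<in> fine_core d P"
    and l: "\<forall>a\<in>tight d P n x0. 0 \<le> l a" "sum l (tight d P n x0) = 1"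
      "\<forall>i<d. (\<Sum>a\<in>tight d P n x0. l a * real_of_int (a i)) = 0"
    and v: "\<exists>i<d. v i \<noteq> 0" "\<forall>a\<in>tight d P n x0. (\<Sum>i<d. a i * v i) = 0"
    unfolding n_def by (rule fine_core_balanced_tight_normals[OF \<open>d > 0\<close> assms(2) x y])
  obtain M N where MN: "inverse_mats d M N" "\<forall>i<e. mat_vec d M v i = 0"
    using exists_inverse_mats_clearing[of e v] assms(1) by blast
  define Q where "Q = conv (proj d e M ` V)"
  have "x0 \<in> fine_adjoint d P n" using x0 by (simp add: fine_core_def n_def)
  then have "proj d e M x0 \<in> fine_adjoint e Q n"
    unfolding Q_def by (rule proj_in_fine_adjoint[OF _ MN(1)]) (simp add: assms(1))
  then have "n \<in> fine_levels e Q" using n by (auto simp: fine_levels_def)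
  moreover have "s \<le> n" if "s \<in> fine_levels e Q" for s
  proof (rule fine_levels_proj_le[OF assms(1) MN(1)])
    show "s \<in> fine_levels e (conv (proj d e M ` V))" using that by (simp add: Q_def)
    show "\<forall>a\<in>tight d P n x0. (\<Sum>k<d. a k * N k e) = 0"
      using clearing_last_column[of e M N v] MN v assms(1) by simp
  qed (use l in \<open>auto simp: tight_def\<close>)
  ultimately have "fine_number e Q = n" unfolding fine_number_eq_Sup by (rule cSup_eq_maximum)
  moreover have "lattice_polytope e Q" "full_dim e Q"
    using proj_lattice_hull full_dim_proj[OF assms(2) MN(1)] assms(1)
    by (auto simp: Q_def lattice_polytope_iff_hull)
  ultimately show ?thesis using that n_def by blast
qed

end

lemma fine_spectrum_Suc_diff_subset:
  "fine_spectrum (Suc e) - fine_spectrum e \<subseteq>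
    {fine_codegree (Suc e) P | P. lattice_polytope (Suc e) P \<and> full_dim (Suc e) P \<and> (\<exists>x. fine_core (Suc e) P = {x})}"
proof
  fix \<mu> assume \<mu>: "\<mu> \<in> fine_spectrum (Suc e) - fine_spectrum e"
  then obtain V where V: "lattice_hull (Suc e) V" "full_dim (Suc e) (conv V)" "\<mu> = fine_codegree (Suc e) (conv V)"
    unfolding fine_spectrum_def lattice_polytope_iff_hull by blast
  have "\<exists>x. fine_core (Suc e) (conv V) = {x}"
  proof (rule ccontr)
    assume "\<not> ?thesis"
    then obtain Q where Q: "lattice_polytope e Q" "full_dim e Q" "fine_number e Q = fine_number (Suc e) (conv V)"
      using lattice_hull.exists_lower_dim_same_fine_number[OF V(1) refl V(2)] by blast
    then have "\<mu> = fine_codegree e Q" by (simp add: V(3) fine_codegree_def)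
    then have "\<mu> \<in> fine_spectrum e" using Q(1,2) unfolding fine_spectrum_def by blast
    then show False using \<mu> by blast
  qed
  moreover have "lattice_polytope (Suc e) (conv V)" using V(1) lattice_polytope_iff_hull by blast
  ultimately show "\<mu> \<in> {fine_codegree (Suc e) P | P. lattice_polytope (Suc e) P \<and> full_dim (Suc e) P \<and>
      (\<exists>x. fine_core (Suc e) P = {x})}"
    using V(2,3) by blast
qed

theorem mainTheorem1:
  fixes d :: nat
  assumes "d > 1"
  shows "fine_spectrum (d - 1) \<subseteq> fine_spectrum d \<and>
         fine_spectrum d - fine_spectrum (d - 1) \<subseteq>
           {fine_codegree d P | P. lattice_polytope d P \<and> full_dim d P \<and>
              (\<exists>x. fine_core d P = {x})}"
proof -
  define e where "e = d - 1"
  have "d = Suc e" "e > 0" using assms by (auto simp: e_def)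
  then show ?thesis
    unfolding e_def[symmetric] using fine_spectrum_subset_Suc fine_spectrum_Suc_diff_subset by simp
qed

end
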